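(* Let $P_0,\dots,P_n$ be a transformation sequence constructed by using the transformation rules R1–R9 (defined in the context), and let $p$ be a non-basic predicate in $P_n$. Assume that: 1. if the folding rule is applied for the derivation of a clause $C$ in program $P_{k+1}$ from clauses $C_1,\dots,C_m$ in program $P_k$ using clauses $D_1,\dots,D_m$ in $\mathit{Defs}_k$, with $0\le k<n$, then for every $i\in\{1,\dots,m\}$ there exists $j\in\{1,\dots,n-1\}$ such that $D_i$ occurs in $P_j$ and $P_{j+1}$ is derived from $P_j$ by unfolding $D_i$; 2. during the transformation sequence $P_0,\dots,P_n$ the definition elimination rule either is never applied or it is applied w.r.t. predicate $p$ once only, in the last step, i.e. when deriving $P_n$ from $P_{n-1}$. Then, for every ground atom $A$ with predicate $p$, $M(P_0\cup\mathit{Defs}_n)\models A$ iff $M(P_n)\models A$.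
   Context: Syntax. There are infinite, pairwise disjoint sets of variables, function symbols (each with an arity) and predicate symbols (each with an arity). The predicate symbols $\mathit{true}$ (arity 0), $=$ and $\neq$ (arity 2) are basic; all other predicate symbols are non-basic. Terms are built from variables and function symbols. A basic atom is $\mathit{true}$, $t_1=t_2$ (an equation) or $t_1\neq t_2$ (a disequation); a non-basic atom is $p(t_1,\dots,t_m)$ with $p$ non-basic. A goal is a conjunction $G_1,G_2$ of atoms, where "," is associative with neutral element $\mathit{true}$. A clause $C$ is $A\leftarrow G$ with $A$ a non-basic atom (its head $hd(C)$) and $G$ a goal (its body $bd(C)$); it is a clause for $p$ if its head has predicate $p$. A program is a set of clauses. In a program $P$, $p$ depends on $q$ iff $(p,q)$ is in the transitive closure of the relation "some clause for $p$ in $P$ has $q$ in its body"; $p$ depends on a clause $C$ iff either $C$ is a clause for $p$ or $C$ is a clause for some $q$ on which $p$ depends. A renamed apart clause is a variant of a clause whose variables are fresh. All mgu's are relevant and idempotent. Declarative semantics. An $\mathcal H$-interpretation is a set $I$ of ground non-basic atoms. $I\models \mathit{true}$; $I\models t=t$ for every ground term $t$; $I\models t_1\neq t_2$ for distinct ground terms $t_1,t_2$; $I\models A$ iff $A\in I$ for ground non-basic $A$; $I\models G_1,G_2$ iff $I\models G_1$ and $I\models G_2$; $I\models C$ for a ground clause iff $I\models hd(C)$ or $I\not\models bd(C)$; $I\models P$ iff $I\models C$ for every ground instance $C$ of a clause of $P$. $M(P)$ denotes the least (w.r.t. inclusion) $\mathcal H$-interpretation $I$ with $I\models P$. Transformation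 rules. A transformation sequence is a sequence of programs $P_0,\dots,P_n$ where for each $k<n$, $P_{k+1}$ is derived from $P_k$ by one of the rules below. $\mathit{Defs}_k$ is the set of clauses (definition clauses) introduced by R1 during the construction of $P_0,\dots,P_k$ ($\mathit{Defs}_0=\emptyset$). R1 (Definition introduction): $P_{k+1}=P_k\cup\{D_1,\dots,D_m\}$, $m\ge1$, where $D_j$ is $\mathit{newp}(X_1,\dots,X_h)\leftarrow \mathit{Body}_j$, $\mathit{newp}$ is a non-basic predicate not occurring in $P_0,\dots,P_k$, $X_1,\dots,X_h$ are distinct variables each occurring in some $\mathit{Body}_j$, every non-basic predicate in each $\mathit{Body}_j$ occurs in $P_0$, and each $\mathit{Body}_j$ contains at least one non-basic atom. R2 (Definition elimination w.r.t. $p$): $P_{k+1}=\{C\in P_k\mid p \text{ depends on } C\}$. R3 (Unfolding): let $C$ be a renamed apart clause $H\leftarrow G_1,A,G_2$ of $P_k$ with $A$ non-basic, and let $C_1,\dots,C_m$ ($m\ge0$) be the clauses of $P_k$ whose heads unify with $A$, via mgu's $\vartheta_1,\dots,\vartheta_m$; then $P_{k+1}=(P_k-\{C\})\cup\{D_1,\dots,D_m\}$ with $D_i=(H\leftarrow G_1,bd(C_i),G_2)\vartheta_i$. R4 (Folding): let $C_i: H\leftarrow G_1,\mathit{Body}_i\vartheta,G_2$ ($i=1,\dots,m$) be renamed clauses of $P_k$ and $D_i:\mathit{newp}(X_1,\dots,X_h)\leftarrow \mathit{Body}_i$ ($i=1,\dots,m$) be all clauses of $\mathit{Defs}_k$ with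 head predicate $\mathit{newp}$, such that for every $i$ and every variable $X$ of $\mathit{Body}_i$ not in $\{X_1,\dots,X_h\}$: $X\vartheta$ is a variable not occurring in $(H,G_1,G_2)$, and $X\vartheta$ does not occur in $Y\vartheta$ for any variable $Y\neq X$ of $\mathit{Body}_i$. Then $P_{k+1}=(P_k-\{C_1,\dots,C_m\})\cup\{E\}$ with $E: H\leftarrow G_1,\mathit{newp}(X_1,\dots,X_h)\vartheta,G_2$. R5 (Subsumption): a clause $H\leftarrow G_1$ subsumes $(H\leftarrow G_1,G_2)\vartheta$ for any substitution $\vartheta$; $P_{k+1}$ is $P_k$ minus a clause subsumed by another clause of $P_k$. R6 (Head generalization): for a clause $C: H\{X/t\}\leftarrow \mathit{Body}$ in $P_k$ where $X$ occurs in $H$ and $X$ does not occur in $C$, replace $C$ by $H\leftarrow X=t,\mathit{Body}$. R7 (Case split): for a clause $C: H\leftarrow \mathit{Body}$ in $P_k$ and a binding $X/t$ with $X$ not occurring in $t$, replace $C$ by the two clauses $(H\leftarrow\mathit{Body})\{X/t\}$ and $H\leftarrow X\neq t,\mathit{Body}$. R8 (Equation elimination): for $C_1: H\leftarrow G_1,t_1=t_2,G_2$ in $P_k$: if $t_1,t_2$ unify with mgu $\vartheta$, replace $C_1$ by $(H\leftarrow G_1,G_2)\vartheta$; otherwise delete $C_1$. R9 (Disequation replacement), for a clause $C$ of $P_k$: (1) if $C$ is $H\leftarrow G_1,t_1\neq t_2,G_2$ with $t_1,t_2$ not unifiable, replace it by $H\leftarrow G_1,G_2$; (2) if $C$ is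 $H\leftarrow G_1,f(t_1,\dots,t_m)\neq f(u_1,\dots,u_m),G_2$, replace it by the $m$ clauses $H\leftarrow G_1,t_i\neq u_i,G_2$; (3) if $C$ is $H\leftarrow G_1,X\neq X,G_2$, remove it; (4) if $C$ is $H\leftarrow G_1,t\neq X,G_2$, replace it by $H\leftarrow G_1,X\neq t,G_2$; (5) if $C$ is $H\leftarrow G_1,X\neq t_1,G_2,X\neq t_2,G_3$ and there is a bijection $\rho$ from the local variables of $X\neq t_1$ in $C$ onto those of $X\neq t_2$ in $C$ with $t_1\rho=t_2$, replace it by $H\leftarrow G_1,X\neq t_1,G_2,G_3$. (A variable $X$ is a local variable of goal $G$ in clause $H\leftarrow G_1,G,G_2$ iff $X\in vars(G)-vars(H,G_1,G_2)$.) *)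

theory Defs
  imports Main
begin

section \<open>Syntax\<close>

text \<open>Variables and symbol names are natural numbers (infinite, pairwise disjoint sorts).
  A function (predicate) symbol is identified by its name together with its arity,
  i.e. by the name and the number of arguments it is applied to.\<close>

datatype trm = Var nat | Fn nat "trm list"

text \<open>The basic atom true is the neutral element of conjunction and is represented by
  the empty goal (goals are lists of atoms, conjunction is list append).\<close>
datatype atom = Eq trm trm | Neq trm trm | Rel nat "trm list"

type_synonym goal = "atom list"
type_synonym hatom = "nat \<times> trm list"   \<comment> \<open>non-basic atom (head)\<close>
type_synonym pred = "nat \<times> nat"        \<comment> \<open>non-basic predicate: name and arity\<close>

datatype clause = Cl (hd: hatom) (bd: goal)

type_synonym program = "clause set"

fun tvars :: "trm \<Rightarrow> nat set" where
  "tvars (Var x) = {x}"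
| "tvars (Fn f ts) = (\<Union>t\<in>set ts. tvars t)"

definition tsvars :: "trm list \<Rightarrow> nat set" where
  "tsvars ts = (\<Union>t\<in>set ts. tvars t)"

fun avars :: "atom \<Rightarrow> nat set" where
  "avars (Eq t u) = tvars t \<union> tvars u"
| "avars (Neq t u) = tvars t \<union> tvars u"
| "avars (Rel p ts) = tsvars ts"

definition gvars :: "goal \<Rightarrow> nat set" where
  "gvars G = (\<Union>a\<in>set G. avars a)"

definition hvars :: "hatom \<Rightarrow> nat set" where
  "hvars H = tsvars (snd H)"

definition cvars :: "clause \<Rightarrow> nat set" where
  "cvars C = hvars (hd C) \<union> gvars (bd C)"

definition hpred :: "hatom \<Rightarrow> pred" where
  "hpred H = (fst H, length (snd H))"

fun apred :: "atom \<Rightarrow> pred set" where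
  "apred (Rel p ts) = {(p, length ts)}"
| "apred _ = {}"

definition gpreds :: "goal \<Rightarrow> pred set" where
  "gpreds G = (\<Union>a\<in>set G. apred a)"

definition is_nonbasic :: "atom \<Rightarrow> bool" where
  "is_nonbasic a = (\<exists>p ts. a = Rel p ts)"

definition prog_preds :: "program \<Rightarrow> pred set" where
  "prog_preds P = (\<Union>C\<in>P. {hpred (hd C)} \<union> gpreds (bd C))"

section \<open>Substitutions\<close>

type_synonym subst = "nat \<Rightarrow> trm"

fun subst_tm :: "subst \<Rightarrow> trm \<Rightarrow> trm" where
  "subst_tm \<sigma> (Var x) = \<sigma> x"
| "subst_tm \<sigma> (Fn f ts) = Fn f (map (subst_tm \<sigma>) ts)"

fun subst_at :: "subst \<Rightarrow> atom \<Rightarrow> atom" where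
  "subst_at \<sigma> (Eq t u) = Eq (subst_tm \<sigma> t) (subst_tm \<sigma> u)"
| "subst_at \<sigma> (Neq t u) = Neq (subst_tm \<sigma> t) (subst_tm \<sigma> u)"
| "subst_at \<sigma> (Rel p ts) = Rel p (map (subst_tm \<sigma>) ts)"

definition subst_goal :: "subst \<Rightarrow> goal \<Rightarrow> goal" where
  "subst_goal \<sigma> G = map (subst_at \<sigma>) G"

definition subst_hd :: "subst \<Rightarrow> hatom \<Rightarrow> hatom" where
  "subst_hd \<sigma> H = (fst H, map (subst_tm \<sigma>) (snd H))"

definition subst_cl :: "subst \<Rightarrow> clause \<Rightarrow> clause" where
  "subst_cl \<sigma> C = Cl (subst_hd \<sigma> (hd C)) (subst_goal \<sigma> (bd C))"

definition unifier :: "subst \<Rightarrow> trm list \<Rightarrow> trm list \<Rightarrow> bool" where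
  "unifier \<sigma> ts us = (map (subst_tm \<sigma>) ts = map (subst_tm \<sigma>) us)"

definition unifiable :: "trm list \<Rightarrow> trm list \<Rightarrow> bool" where
  "unifiable ts us = (\<exists>\<sigma>. unifier \<sigma> ts us)"

text \<open>Relevant, idempotent most general unifier.\<close>
definition is_mgu :: "subst \<Rightarrow> trm list \<Rightarrow> trm list \<Rightarrow> bool" where
  "is_mgu \<sigma> ts us =
     (unifier \<sigma> ts us
      \<and> (\<forall>\<tau>. unifier \<tau> ts us \<longrightarrow> (\<exists>\<eta>. \<forall>x. \<tau> x = subst_tm \<eta> (\<sigma> x)))
      \<and> (\<forall>x. subst_tm \<sigma> (\<sigma> x) = \<sigma> x)
      \<and> (\<forall>x. \<sigma> x \<noteq> Var x \<longrightarrow>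
             x \<in> tsvars ts \<union> tsvars us \<and> tvars (\<sigma> x) \<subseteq> tsvars ts \<union> tsvars us))"

definition hunifiable :: "atom \<Rightarrow> hatom \<Rightarrow> bool" where
  "hunifiable a H = (\<exists>q us. a = Rel q us \<and> q = fst H \<and> unifiable us (snd H))"

definition is_hmgu :: "subst \<Rightarrow> atom \<Rightarrow> hatom \<Rightarrow> bool" where
  "is_hmgu \<sigma> a H = (\<exists>q us. a = Rel q us \<and> q = fst H \<and> is_mgu \<sigma> us (snd H))"

text \<open>A renaming maps variables injectively to variables.\<close>
definition ren :: "(nat \<Rightarrow> nat) \<Rightarrow> subst" where
  "ren \<rho> = (\<lambda>x. Var (\<rho> x))"

section \<open>Dependencies\<close>

definition dep1 :: "program \<Rightarrow> (pred \<times> pred) set" where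
  "dep1 P = {(p, q). \<exists>C\<in>P. hpred (hd C) = p \<and> q \<in> gpreds (bd C)}"

definition depends :: "program \<Rightarrow> pred \<Rightarrow> pred \<Rightarrow> bool" where
  "depends P p q = ((p, q) \<in> (dep1 P)\<^sup>+)"

definition depends_cl :: "program \<Rightarrow> pred \<Rightarrow> clause \<Rightarrow> bool" where
  "depends_cl P p C = (C \<in> P \<and> (hpred (hd C) = p \<or> depends P p (hpred (hd C))))"

section \<open>Transformation rules\<close>

text \<open>Labels recording which rule was applied at each step
  (with the data that the hypotheses of the theorem refer to).\<close>
datatype rule_app =
    RDef "clause set"     \<comment> \<open>R1, with the introduced definition clauses\<close>
  | RElim pred            \<comment> \<open>R2, w.r.t. the given predicate\<close>
  | RUnfold clause        \<comment> \<open>R3, unfolding the given clause\<close>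
  | RFold pred            \<comment> \<open>R4, folding using the definitions of the given predicate\<close>
  | RSubsume | RHeadGen | RCaseSplit | REqElim | RDiseq

definition defs_upto :: "(nat \<Rightarrow> rule_app) \<Rightarrow> nat \<Rightarrow> clause set" where
  "defs_upto lab k = \<Union>{Ds. \<exists>j<k. lab j = RDef Ds}"

definition def_intro :: "(nat \<Rightarrow> program) \<Rightarrow> nat \<Rightarrow> clause set \<Rightarrow> program \<Rightarrow> bool" where
  "def_intro Ps k Ds P' =
    (finite Ds \<and> Ds \<noteq> {} \<and>
     (\<exists>newp Xs. distinct Xs \<and>
        (\<forall>D\<in>Ds. hd D = (newp, map Var Xs)) \<and>
        (\<forall>x\<in>set Xs. \<exists>D\<in>Ds. x \<in> gvars (bd D)) \<and>
        (\<forall>j\<le>k. (newp, length Xs) \<notin> prog_preds (Ps j)) \<and>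
        (\<forall>D\<in>Ds. gpreds (bd D) \<subseteq> prog_preds (Ps 0)) \<and>
        (\<forall>D\<in>Ds. \<exists>a\<in>set (bd D). is_nonbasic a)) \<and>
     P' = Ps k \<union> Ds)"

definition def_elim :: "program \<Rightarrow> pred \<Rightarrow> program \<Rightarrow> bool" where
  "def_elim P p P' = (P' = {C\<in>P. depends_cl P p C})"

text \<open>Unfolding clause C of P at atom A: every clause D of P is renamed apart
  (injective variable renaming rho D, sharing no variable with C); for those whose
  renamed head unifies with A, an mgu sigma D is taken.\<close>
definition unfold_step :: "program \<Rightarrow> clause \<Rightarrow> program \<Rightarrow> bool" where
  "unfold_step P C P' =
    (C \<in> P \<and>
     (\<exists>G1 A G2 \<rho> \<sigma>. bd C = G1 @ [A] @ G2 \<and> is_nonbasic A \<and>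
        (\<forall>D\<in>P. inj (\<rho> D) \<and> cvars (subst_cl (ren (\<rho> D)) D) \<inter> cvars C = {}) \<and>
        (\<forall>D\<in>P. hunifiable A (hd (subst_cl (ren (\<rho> D)) D)) \<longrightarrow>
                 is_hmgu (\<sigma> D) A (hd (subst_cl (ren (\<rho> D)) D))) \<and>
        P' = (P - {C}) \<union>
             {subst_cl (\<sigma> D) (Cl (hd C) (G1 @ bd (subst_cl (ren (\<rho> D)) D) @ G2)) | D.
                D \<in> P \<and> hunifiable A (hd (subst_cl (ren (\<rho> D)) D))}))"

text \<open>Folding using all definition clauses Ds (in Defs_k) with head predicate newp.
  Each D in Ds is matched by a (renamed) clause of P, namely the renaming via rho D
  of the clause Cf D of P.\<close>
definition fold_step :: "clause set \<Rightarrow> program \<Rightarrow> pred \<Rightarrow> program \<Rightarrow> bool" where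
  "fold_step Defs P newp P' =
    (let Ds = {D\<in>Defs. hpred (hd D) = newp} in
     Ds \<noteq> {} \<and>
     (\<exists>H G1 G2 \<theta> Cf \<rho>.
        (\<forall>D\<in>Ds. Cf D \<in> P \<and> inj (\<rho> D) \<and>
           subst_cl (ren (\<rho> D)) (Cf D) = Cl H (G1 @ subst_goal \<theta> (bd D) @ G2)) \<and>
        (\<forall>D\<in>Ds. \<forall>X\<in>gvars (bd D). X \<notin> hvars (hd D) \<longrightarrow>
           (\<exists>Z. \<theta> X = Var Z \<and> Z \<notin> hvars H \<union> gvars G1 \<union> gvars G2 \<and>
                (\<forall>Y\<in>gvars (bd D). Y \<noteq> X \<longrightarrow> Z \<notin> tvars (\<theta> Y)))) \<and>
        (\<forall>D\<in>Ds. P' = (P - Cf ` Ds) \<union> {Cl H (G1 @ [Rel (fst newp) (map (subst_tm \<theta>) (snd (hd D)))] @ G2)})))"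

definition subsumes :: "clause \<Rightarrow> clause \<Rightarrow> bool" where
  "subsumes C C' = (\<exists>\<theta> G2. C' = subst_cl \<theta> (Cl (hd C) (bd C @ G2)))"

definition subsume_step :: "program \<Rightarrow> program \<Rightarrow> bool" where
  "subsume_step P P' = (\<exists>C\<in>P. \<exists>C'\<in>P. C \<noteq> C' \<and> subsumes C C' \<and> P' = P - {C'})"

definition headgen_step :: "program \<Rightarrow> program \<Rightarrow> bool" where
  "headgen_step P P' =
    (\<exists>C\<in>P. \<exists>H X t. X \<in> hvars H \<and> X \<notin> cvars C \<and> hd C = subst_hd (Var(X := t)) H \<and>
        P' = (P - {C}) \<union> {Cl H (Eq (Var X) t # bd C)})"

definition casesplit_step :: "program \<Rightarrow> program \<Rightarrow> bool" where
  "casesplit_step P P' =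
    (\<exists>C\<in>P. \<exists>X t. X \<notin> tvars t \<and>
        P' = (P - {C}) \<union> {subst_cl (Var(X := t)) C, Cl (hd C) (Neq (Var X) t # bd C)})"

definition eqelim_step :: "program \<Rightarrow> program \<Rightarrow> bool" where
  "eqelim_step P P' =
    (\<exists>C\<in>P. \<exists>G1 t1 t2 G2. bd C = G1 @ [Eq t1 t2] @ G2 \<and>
       (if unifiable [t1] [t2]
        then (\<exists>\<theta>. is_mgu \<theta> [t1] [t2] \<and> P' = (P - {C}) \<union> {subst_cl \<theta> (Cl (hd C) (G1 @ G2))})
        else P' = P - {C}))"

definition local_vars :: "hatom \<Rightarrow> goal \<Rightarrow> goal \<Rightarrow> goal \<Rightarrow> nat set" where
  "local_vars H G1 G G2 = gvars G - (hvars H \<union> gvars G1 \<union> gvars G2)"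

definition diseq_step :: "program \<Rightarrow> program \<Rightarrow> bool" where
  "diseq_step P P' =
    (\<exists>C\<in>P. let H = hd C in
       (\<exists>G1 t1 t2 G2. bd C = G1 @ [Neq t1 t2] @ G2 \<and> \<not> unifiable [t1] [t2] \<and>
          P' = (P - {C}) \<union> {Cl H (G1 @ G2)})
     \<or> (\<exists>G1 f ts us G2. bd C = G1 @ [Neq (Fn f ts) (Fn f us)] @ G2 \<and> length ts = length us \<and>
          P' = (P - {C}) \<union> {Cl H (G1 @ [Neq (ts ! i) (us ! i)] @ G2) | i. i < length ts})
     \<or> (\<exists>G1 X G2. bd C = G1 @ [Neq (Var X) (Var X)] @ G2 \<and> P' = P - {C})
     \<or> (\<exists>G1 t X G2. bd C = G1 @ [Neq t (Var X)] @ G2 \<and>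
          P' = (P - {C}) \<union> {Cl H (G1 @ [Neq (Var X) t] @ G2)})
     \<or> (\<exists>G1 X t1 G2 t2 G3 \<rho>.
          bd C = G1 @ [Neq (Var X) t1] @ G2 @ [Neq (Var X) t2] @ G3 \<and>
          bij_betw \<rho> (local_vars H G1 [Neq (Var X) t1] (G2 @ [Neq (Var X) t2] @ G3))
                     (local_vars H (G1 @ [Neq (Var X) t1] @ G2) [Neq (Var X) t2] G3) \<and>
          subst_tm (\<lambda>x. if x \<in> local_vars H G1 [Neq (Var X) t1] (G2 @ [Neq (Var X) t2] @ G3)
                         then Var (\<rho> x) else Var x) t1 = t2 \<and>
          P' = (P - {C}) \<union> {Cl H (G1 @ [Neq (Var X) t1] @ G2 @ G3)}))"

definition tstep :: "(nat \<Rightarrow> program) \<Rightarrow> (nat \<Rightarrow> rule_app) \<Rightarrow> nat \<Rightarrow> bool" where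
  "tstep Ps lab k =
    (let P = Ps k; P' = Ps (Suc k) in
     case lab k of
       RDef Ds \<Rightarrow> def_intro Ps k Ds P'
     | RElim p \<Rightarrow> def_elim P p P'
     | RUnfold C \<Rightarrow> unfold_step P C P'
     | RFold newp \<Rightarrow> fold_step (defs_upto lab k) P newp P'
     | RSubsume \<Rightarrow> subsume_step P P'
     | RHeadGen \<Rightarrow> headgen_step P P'
     | RCaseSplit \<Rightarrow> casesplit_step P P'
     | REqElim \<Rightarrow> eqelim_step P P'
     | RDiseq \<Rightarrow> diseq_step P P')"

definition transf_seq :: "(nat \<Rightarrow> program) \<Rightarrow> (nat \<Rightarrow> rule_app) \<Rightarrow> nat \<Rightarrow> bool" where
  "transf_seq Ps lab n = (\<forall>k<n. tstep Ps lab k)"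

section \<open>Declarative semantics\<close>

definition ground :: "trm \<Rightarrow> bool" where
  "ground t = (tvars t = {})"

definition ground_hatom :: "hatom \<Rightarrow> bool" where
  "ground_hatom A = (\<forall>t\<in>set (snd A). ground t)"

definition ground_subst :: "subst \<Rightarrow> bool" where
  "ground_subst \<sigma> = (\<forall>x. ground (\<sigma> x))"

fun hsat :: "hatom set \<Rightarrow> atom \<Rightarrow> bool" where
  "hsat I (Eq t u) = (t = u)"
| "hsat I (Neq t u) = (t \<noteq> u)"
| "hsat I (Rel p ts) = ((p, ts) \<in> I)"

definition gsat :: "hatom set \<Rightarrow> goal \<Rightarrow> bool" where
  "gsat I G = (\<forall>a\<in>set G. hsat I a)"

definition herbrand_interp :: "hatom set \<Rightarrow> bool" where
  "herbrand_interp I = (\<forall>A\<in>I. ground_hatom A)"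

definition models :: "hatom set \<Rightarrow> program \<Rightarrow> bool" where
  "models I P = (\<forall>C\<in>P. \<forall>\<sigma>. ground_subst \<sigma> \<longrightarrow>
      gsat I (bd (subst_cl \<sigma> C)) \<longrightarrow> hd (subst_cl \<sigma> C) \<in> I)"

definition least_model :: "program \<Rightarrow> hatom set" where
  "least_model P = \<Inter>{I. herbrand_interp I \<and> models I P}"

end

(*
  Let M be the least model of P0 together with all definitions, and weigh an atom of M by the
  least number of uses of clauses of P0 in a derivation of it; definition clauses are free.
  Every rule except definition elimination keeps M a model of the current program, so the
  least model of P_n is contained in M.  Conversely, along the sequence, every atom A of M of
  an old or already introduced predicate is the head of a ground instance of a clause of P_k
  whose body holds in M and weighs at most w(A), and at most w(A) - 1 if A has credit: its
  predicate is old, or A is an instance of a definition that has already been unfolded.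
  Folding does not increase weights, as a definition atom weighs no more than its body, and
  the condition that the definitions used for folding get unfolded gives credit to all atoms
  of folded predicates.  Hence 2 w(A) + 1 - credit(A) decreases from the head of a witness to
  its body atoms, and well-founded induction puts M inside the least model of P_n.  Finally,
  definition elimination with respect to p keeps exactly the clauses p depends on, which
  does not change the atoms of p.
*)
theory Submission
  imports Defs
begin

section \<open>Substitutions\<close>

definition subst_comp :: "subst \<Rightarrow> subst \<Rightarrow> subst" where
  "subst_comp \<tau> \<sigma> = (\<lambda>x. subst_tm \<tau> (\<sigma> x))"

lemma subst_tm_comp: "subst_tm \<tau> (subst_tm \<sigma> t) = subst_tm (subst_comp \<tau> \<sigma>) t"
  by (induction t) (auto simp: subst_comp_def)

lemma subst_tm_o_subst_tm[simp]: "subst_tm \<tau> \<circ> subst_tm \<sigma> = subst_tm (subst_comp \<tau> \<sigma>)"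
  by (simp add: fun_eq_iff subst_tm_comp)

lemma map_subst_tm_comp:
  "map (subst_tm \<tau>) (map (subst_tm \<sigma>) ts) = map (subst_tm (subst_comp \<tau> \<sigma>)) ts"
  by (simp add: subst_tm_comp)

lemma subst_at_comp: "subst_at \<tau> (subst_at \<sigma> a) = subst_at (subst_comp \<tau> \<sigma>) a"
  by (cases a) (auto simp: subst_tm_comp)

lemma subst_goal_comp: "subst_goal \<tau> (subst_goal \<sigma> G) = subst_goal (subst_comp \<tau> \<sigma>) G"
  by (auto simp: subst_goal_def subst_at_comp)

lemma subst_hd_comp: "subst_hd \<tau> (subst_hd \<sigma> H) = subst_hd (subst_comp \<tau> \<sigma>) H"
  by (auto simp: subst_hd_def subst_tm_comp)

lemma subst_cl_comp: "subst_cl \<tau> (subst_cl \<sigma> C) = subst_cl (subst_comp \<tau> \<sigma>) C"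
  by (auto simp: subst_cl_def subst_goal_comp subst_hd_comp)

lemma subst_comp_upd: "subst_comp \<sigma> (Var(X := t)) = \<sigma>(X := subst_tm \<sigma> t)"
  by (auto simp: subst_comp_def)

lemma subst_tm_cong: "(\<And>x. x \<in> tvars t \<Longrightarrow> \<sigma> x = \<sigma>' x) \<Longrightarrow> subst_tm \<sigma> t = subst_tm \<sigma>' t"
  by (induction t) auto

lemma map_subst_tm_cong:
  "(\<And>x. x \<in> tsvars ts \<Longrightarrow> \<sigma> x = \<sigma>' x) \<Longrightarrow> map (subst_tm \<sigma>) ts = map (subst_tm \<sigma>') ts"
  unfolding tsvars_def by (intro map_cong refl subst_tm_cong) auto

lemma subst_at_cong: "(\<And>x. x \<in> avars a \<Longrightarrow> \<sigma> x = \<sigma>' x) \<Longrightarrow> subst_at \<sigma> a = subst_at \<sigma>' a"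
  by (cases a) (auto simp: tsvars_def intro!: subst_tm_cong)

lemma subst_goal_cong: "(\<And>x. x \<in> gvars G \<Longrightarrow> \<sigma> x = \<sigma>' x) \<Longrightarrow> subst_goal \<sigma> G = subst_goal \<sigma>' G"
  by (auto simp: subst_goal_def gvars_def intro: subst_at_cong)

lemma subst_hd_cong: "(\<And>x. x \<in> hvars H \<Longrightarrow> \<sigma> x = \<sigma>' x) \<Longrightarrow> subst_hd \<sigma> H = subst_hd \<sigma>' H"
  by (auto simp: subst_hd_def hvars_def tsvars_def intro!: subst_tm_cong)

lemma subst_cl_cong: "(\<And>x. x \<in> cvars C \<Longrightarrow> \<sigma> x = \<sigma>' x) \<Longrightarrow> subst_cl \<sigma> C = subst_cl \<sigma>' C"
  by (auto simp: subst_cl_def cvars_def intro: subst_hd_cong subst_goal_cong)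

lemma subst_tm_eq_imp_agree: "subst_tm \<sigma> t = subst_tm \<sigma>' t \<Longrightarrow> x \<in> tvars t \<Longrightarrow> \<sigma> x = \<sigma>' x"
proof (induction t)
  case (Fn f ts) then show ?case by (auto simp: map_eq_conv)
qed auto

lemma tvars_subst_tm: "tvars (subst_tm \<sigma> t) = (\<Union>x\<in>tvars t. tvars (\<sigma> x))"
  by (induction t) auto

lemma hvars_subst_hd: "hvars (subst_hd \<theta> H) = (\<Union>x\<in>hvars H. tvars (\<theta> x))"
  by (auto simp: hvars_def subst_hd_def tsvars_def tvars_subst_tm)

lemma subst_tm_ground: "ground t \<Longrightarrow> subst_tm \<sigma> t = t"
proof (induction t)
  case (Fn f ts) then show ?case by (auto simp: ground_def intro: map_idI)
qed (simp add: ground_def)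

lemma ground_subst_tm: "ground_subst \<sigma> \<Longrightarrow> ground (subst_tm \<sigma> t)"
  by (auto simp: tvars_subst_tm ground_subst_def ground_def)

lemma ground_subst_comp: "ground_subst \<sigma> \<Longrightarrow> ground_subst (subst_comp \<sigma> \<theta>)"
  by (simp add: ground_subst_def subst_comp_def ground_subst_tm)

lemma ground_subst_upd: "ground_subst \<sigma> \<Longrightarrow> ground t \<Longrightarrow> ground_subst (\<sigma>(X := t))"
  by (simp add: ground_subst_def)

lemma ground_hatom_subst_hd: "ground_subst \<sigma> \<Longrightarrow> ground_hatom (subst_hd \<sigma> H)"
  by (auto simp: ground_hatom_def subst_hd_def ground_subst_tm)

lemma hd_subst_cl[simp]: "hd (subst_cl \<sigma> C) = subst_hd \<sigma> (hd C)"
  and bd_subst_cl[simp]: "bd (subst_cl \<sigma> C) = subst_goal \<sigma> (bd C)"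
  by (auto simp: subst_cl_def)

lemma subst_goal_append[simp]: "subst_goal \<sigma> (G1 @ G2) = subst_goal \<sigma> G1 @ subst_goal \<sigma> G2"
  and subst_goal_Cons[simp]: "subst_goal \<sigma> (a # G) = subst_at \<sigma> a # subst_goal \<sigma> G"
  and subst_goal_Nil[simp]: "subst_goal \<sigma> [] = []"
  by (auto simp: subst_goal_def)

lemma gvars_append[simp]: "gvars (G1 @ G2) = gvars G1 \<union> gvars G2"
  and gvars_Cons[simp]: "gvars (a # G) = avars a \<union> gvars G"
  and gvars_Nil[simp]: "gvars [] = {}"
  by (auto simp: gvars_def)

lemma gpreds_append[simp]: "gpreds (G1 @ G2) = gpreds G1 \<union> gpreds G2"
  and gpreds_Cons[simp]: "gpreds (a # G) = apred a \<union> gpreds G"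
  and gpreds_Nil[simp]: "gpreds [] = {}"
  by (auto simp: gpreds_def)

lemma apred_subst_at[simp]: "apred (subst_at \<sigma> a) = apred a"
  by (cases a) auto

lemma gpreds_subst_goal[simp]: "gpreds (subst_goal \<sigma> G) = gpreds G"
  by (auto simp: gpreds_def subst_goal_def)

lemma hpred_subst_hd[simp]: "hpred (subst_hd \<sigma> H) = hpred H"
  by (auto simp: hpred_def subst_hd_def)

lemma Rel_in_gpreds: "Rel p ts \<in> set G \<Longrightarrow> (p, length ts) \<in> gpreds G"
  by (force simp: gpreds_def)

lemma hpred_in_prog_preds: "C \<in> P \<Longrightarrow> hpred (hd C) \<in> prog_preds P"
  by (auto simp: prog_preds_def)

lemma mgu_unifier: "is_mgu \<mu> ts us \<Longrightarrow> map (subst_tm \<mu>) ts = map (subst_tm \<mu>) us"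
  by (auto simp: is_mgu_def unifier_def)

text \<open>The factor given by generality need not be ground; composing it with any ground
  substitution makes it so.\<close>
lemma ground_unifier_factors_mgu:
  assumes "is_mgu \<mu> ts us" "map (subst_tm \<gamma>) ts = map (subst_tm \<gamma>) us" "ground_subst \<gamma>"
  obtains \<tau> where "ground_subst \<tau>" "subst_comp \<tau> \<mu> = \<gamma>"
proof -
  from assms(1,2) obtain \<eta> where \<eta>: "\<And>x. \<gamma> x = subst_tm \<eta> (\<mu> x)"
    unfolding is_mgu_def unifier_def by blast
  define \<tau> where "\<tau> = subst_comp (\<lambda>_. Fn 0 []) \<eta>"
  have "ground_subst \<tau>"
    by (auto simp: \<tau>_def ground_subst_def ground_def subst_comp_def tvars_subst_tm)
  moreover have "subst_comp \<tau> \<mu> x = \<gamma> x" for x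
  proof -
    have "subst_comp \<tau> \<mu> x = subst_tm (\<lambda>_. Fn 0 []) (subst_tm \<eta> (\<mu> x))"
      by (simp add: \<tau>_def subst_comp_def subst_tm_comp)
    also have "\<dots> = \<gamma> x"
      using assms(3) by (simp add: \<eta>[symmetric] subst_tm_ground ground_subst_def)
    finally show ?thesis .
  qed
  ultimately show thesis using that by blast
qed

text \<open>Variables outside the range of the renaming get an arbitrary ground value.\<close>
definition unrename :: "(nat \<Rightarrow> nat) \<Rightarrow> subst \<Rightarrow> subst" where
  "unrename \<rho> \<sigma> = (\<lambda>y. if y \<in> range \<rho> then \<sigma> (inv \<rho> y) else Fn 0 [])"

lemma ground_subst_unrename: "ground_subst \<sigma> \<Longrightarrow> ground_subst (unrename \<rho> \<sigma>)"
  by (auto simp: ground_subst_def unrename_def ground_def)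

lemma subst_cl_unrename:
  "inj \<rho> \<Longrightarrow> subst_cl (unrename \<rho> \<sigma>) (subst_cl (ren \<rho>) C) = subst_cl \<sigma> C"
proof -
  assume "inj \<rho>"
  then have "subst_comp (unrename \<rho> \<sigma>) (ren \<rho>) = \<sigma>"
    by (auto simp: subst_comp_def unrename_def ren_def)
  then show ?thesis by (simp add: subst_cl_comp)
qed

section \<open>Goals, weights and least models\<close>

lemma gsat_append[simp]: "gsat I (G1 @ G2) = (gsat I G1 \<and> gsat I G2)"
  and gsat_Cons[simp]: "gsat I (a # G) = (hsat I a \<and> gsat I G)"
  and gsat_Nil[simp]: "gsat I []"
  by (auto simp: gsat_def)

fun rel_atoms :: "goal \<Rightarrow> hatom list" where
  "rel_atoms [] = []"
| "rel_atoms (Rel p ts # G) = (p, ts) # rel_atoms G"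
| "rel_atoms (_ # G) = rel_atoms G"

lemma rel_atoms_append[simp]: "rel_atoms (G1 @ G2) = rel_atoms G1 @ rel_atoms G2"
  by (induction G1 rule: rel_atoms.induct) auto

lemma in_rel_atoms_iff: "(p, ts) \<in> set (rel_atoms G) \<longleftrightarrow> Rel p ts \<in> set G"
  by (induction G rule: rel_atoms.induct) auto

lemma gsat_iff: "gsat I G \<longleftrightarrow> gsat {} (filter (Not \<circ> is_nonbasic) G) \<and> set (rel_atoms G) \<subseteq> I"
  by (induction G rule: rel_atoms.induct) (auto simp: is_nonbasic_def)

lemma gsat_mono_rel_atoms:
  assumes "gsat I G" "\<And>p ts. Rel p ts \<in> set G \<Longrightarrow> (p, ts) \<in> J"
  shows "gsat J G"
  unfolding gsat_def
proof
  fix a assume "a \<in> set G"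
  then show "hsat J a" using assms by (cases a rule: atom.exhaust) (auto simp: gsat_def)
qed

definition goal_weight :: "(hatom \<Rightarrow> nat) \<Rightarrow> goal \<Rightarrow> nat" where
  "goal_weight w G = sum_list (map w (rel_atoms G))"

lemma goal_weight_simps[simp]:
  "goal_weight w [] = 0"
  "goal_weight w (G1 @ G2) = goal_weight w G1 + goal_weight w G2"
  "goal_weight w (Rel p ts # G) = w (p, ts) + goal_weight w G"
  "goal_weight w (Eq t u # G) = goal_weight w G"
  "goal_weight w (Neq t u # G) = goal_weight w G"
  by (auto simp: goal_weight_def)

lemma weight_le_goal_weight: "Rel p ts \<in> set G \<Longrightarrow> w (p, ts) \<le> goal_weight w G"
  unfolding goal_weight_def by (rule member_le_sum_list) (auto simp: in_rel_atoms_iff)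

text \<open>Derivations from the ground instances of P in which every use of a clause C costs c C;
  the last argument is the total cost.\<close>
inductive derives :: "program \<Rightarrow> (clause \<Rightarrow> nat) \<Rightarrow> hatom \<Rightarrow> nat \<Rightarrow> bool" for P c where
  "C \<in> P \<Longrightarrow> ground_subst \<sigma> \<Longrightarrow>
   gsat {} (filter (Not \<circ> is_nonbasic) (subst_goal \<sigma> (bd C))) \<Longrightarrow>
   list_all2 (derives P c) (rel_atoms (subst_goal \<sigma> (bd C))) ns \<Longrightarrow>
   derives P c (subst_hd \<sigma> (hd C)) (c C + sum_list ns)"

lemma list_all2_ex_right: "list_all2 P xs ys \<Longrightarrow> x \<in> set xs \<Longrightarrow> \<exists>y. P x y"
  by (induction rule: list_all2_induct) auto

lemma derives_ground: "derives P c A k \<Longrightarrow> ground_hatom A"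
  by (induction rule: derives.induct) (simp add: ground_hatom_subst_hd)

lemma derives_in_model: "derives P c A k \<Longrightarrow> models I P \<Longrightarrow> A \<in> I"
proof (induction rule: derives.induct)
  case (1 C \<sigma> ns)
  then have "set (rel_atoms (subst_goal \<sigma> (bd C))) \<subseteq> I"
    using list_all2_ex_right by fast
  then show ?case using 1 by (auto simp: models_def gsat_iff[of I])
qed

lemma models_derivable: "models {A. \<exists>k. derives P c A k} P"
  unfolding models_def
proof (intro ballI allI impI)
  fix C \<sigma> assume C: "C \<in> P" and g: "ground_subst \<sigma>"
    and "gsat {A. \<exists>k. derives P c A k} (bd (subst_cl \<sigma> C))"
  then have b: "gsat {} (filter (Not \<circ> is_nonbasic) (subst_goal \<sigma> (bd C)))"
    and "\<forall>B\<in>set (rel_atoms (subst_goal \<sigma> (bd C))). \<exists>k. derives P c B k"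
    by (auto simp: gsat_iff[of "{A. \<exists>k. derives P c A k}"])
  then obtain f where "\<forall>B\<in>set (rel_atoms (subst_goal \<sigma> (bd C))). derives P c B (f B)"
    by (auto dest: bchoice)
  then have "list_all2 (derives P c) (rel_atoms (subst_goal \<sigma> (bd C)))
      (map f (rel_atoms (subst_goal \<sigma> (bd C))))"
    by (simp add: list_all2_map2 list_all2_same)
  then show "hd (subst_cl \<sigma> C) \<in> {A. \<exists>k. derives P c A k}"
    using derives.intros[OF C g b] by auto
qed

lemma least_model_eq_derivable: "least_model P = {A. \<exists>k. derives P c A k}"
proof
  have "herbrand_interp {A. \<exists>k. derives P c A k}"
    by (auto simp: herbrand_interp_def intro: derives_ground)
  then show "least_model P \<subseteq> {A. \<exists>k. derives P c A k}"
    unfolding least_model_def using models_derivable by blast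
  show "{A. \<exists>k. derives P c A k} \<subseteq> least_model P"
    unfolding least_model_def using derives_in_model by blast
qed

lemma models_least_model: "models (least_model P) P"
  using models_derivable least_model_eq_derivable by metis

lemma herbrand_interp_least_model: "herbrand_interp (least_model P)"
  by (auto simp: least_model_eq_derivable[of P "\<lambda>_. 0"] herbrand_interp_def intro: derives_ground)

lemma least_model_le: "herbrand_interp I \<Longrightarrow> models I P \<Longrightarrow> least_model P \<subseteq> I"
  unfolding least_model_def by auto

lemma models_subset: "models I P \<Longrightarrow> P' \<subseteq> P \<Longrightarrow> models I P'"
  by (auto simp: models_def)

lemma least_model_mono: "P' \<subseteq> P \<Longrightarrow> least_model P' \<subseteq> least_model P"
  by (meson herbrand_interp_least_model least_model_le models_least_model models_subset)

lemma subset_least_model_wf: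
  fixes \<mu> :: "hatom \<Rightarrow> nat"
  assumes "\<And>A. A \<in> S \<Longrightarrow> \<exists>C\<in>P. \<exists>\<sigma>. ground_subst \<sigma> \<and> subst_hd \<sigma> (hd C) = A \<and>
       gsat S (subst_goal \<sigma> (bd C)) \<and>
       (\<forall>p ts. Rel p ts \<in> set (subst_goal \<sigma> (bd C)) \<longrightarrow> \<mu> (p, ts) < \<mu> A)"
  shows "S \<subseteq> least_model P"
proof
  fix A assume "A \<in> S"
  then show "A \<in> least_model P"
  proof (induction "\<mu> A" arbitrary: A rule: less_induct)
    case less
    obtain C \<sigma> where C: "C \<in> P" "ground_subst \<sigma>" "subst_hd \<sigma> (hd C) = A"
      and s: "gsat S (subst_goal \<sigma> (bd C))"
      and dec: "\<forall>p ts. Rel p ts \<in> set (subst_goal \<sigma> (bd C)) \<longrightarrow> \<mu> (p, ts) < \<mu> A"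
      using assms[OF less.prems] by blast
    have "gsat (least_model P) (subst_goal \<sigma> (bd C))"
      using s by (rule gsat_mono_rel_atoms) (use dec less.hyps s in \<open>auto simp: gsat_def\<close>)
    then show ?case using models_least_model[of P] C by (auto simp: models_def)
  qed
qed

section \<open>Validity, covering and body predicates\<close>

definition valid :: "hatom set \<Rightarrow> clause \<Rightarrow> bool" where
  "valid I C \<longleftrightarrow>
     (\<forall>\<sigma>. ground_subst \<sigma> \<longrightarrow> gsat I (subst_goal \<sigma> (bd C)) \<longrightarrow> subst_hd \<sigma> (hd C) \<in> I)"

lemma validI:
  "(\<And>\<sigma>. ground_subst \<sigma> \<Longrightarrow> gsat I (subst_goal \<sigma> (bd C)) \<Longrightarrow> subst_hd \<sigma> (hd C) \<in> I) \<Longrightarrow> valid I C"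
  by (simp add: valid_def)

lemma validD:
  "valid I C \<Longrightarrow> ground_subst \<sigma> \<Longrightarrow> gsat I (subst_goal \<sigma> (bd C)) \<Longrightarrow> subst_hd \<sigma> (hd C) \<in> I"
  by (simp add: valid_def)

lemma models_iff_valid: "models I P \<longleftrightarrow> (\<forall>C\<in>P. valid I C)"
  by (auto simp: models_def valid_def)

lemma valid_subst_cl: "valid I C \<Longrightarrow> valid I (subst_cl \<theta> C)"
  unfolding valid_def by (metis bd_subst_cl ground_subst_comp hd_subst_cl subst_cl_comp)

text \<open>The bound is written weight + d \<le> b rather than weight \<le> b - d to avoid truncated
  subtraction.\<close>
definition bounded_instance ::
  "hatom set \<Rightarrow> (hatom \<Rightarrow> nat) \<Rightarrow> program \<Rightarrow> hatom \<Rightarrow> nat \<Rightarrow> nat \<Rightarrow> bool" where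
  "bounded_instance I w P A d b \<longleftrightarrow>
     (\<exists>C\<in>P. \<exists>\<sigma>. ground_subst \<sigma> \<and> subst_hd \<sigma> (hd C) = A \<and> gsat I (subst_goal \<sigma> (bd C)) \<and>
        goal_weight w (subst_goal \<sigma> (bd C)) + d \<le> b)"

lemma bounded_instanceI:
  "C \<in> P \<Longrightarrow> ground_subst \<sigma> \<Longrightarrow> subst_hd \<sigma> (hd C) = A \<Longrightarrow> gsat I (subst_goal \<sigma> (bd C)) \<Longrightarrow>
   goal_weight w (subst_goal \<sigma> (bd C)) + d \<le> b \<Longrightarrow> bounded_instance I w P A d b"
  unfolding bounded_instance_def by blast

lemma bounded_instance_mono:
  "bounded_instance I w P A d b \<Longrightarrow> d' \<le> d \<Longrightarrow> b \<le> b' \<Longrightarrow> bounded_instance I w P A d' b'"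
  unfolding bounded_instance_def by (meson add_left_mono order_trans)

definition covered_by :: "hatom set \<Rightarrow> (hatom \<Rightarrow> nat) \<Rightarrow> program \<Rightarrow> program \<Rightarrow> bool" where
  "covered_by I w P P' \<longleftrightarrow>
     (\<forall>C\<in>P. \<forall>\<sigma>. ground_subst \<sigma> \<longrightarrow> gsat I (subst_goal \<sigma> (bd C)) \<longrightarrow>
        bounded_instance I w P' (subst_hd \<sigma> (hd C)) 0 (goal_weight w (subst_goal \<sigma> (bd C))))"

lemma covered_byI:
  assumes "\<And>C \<sigma>. C \<in> P \<Longrightarrow> C \<notin> P' \<Longrightarrow> ground_subst \<sigma> \<Longrightarrow> gsat I (subst_goal \<sigma> (bd C)) \<Longrightarrow>
     bounded_instance I w P' (subst_hd \<sigma> (hd C)) 0 (goal_weight w (subst_goal \<sigma> (bd C)))"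
  shows "covered_by I w P P'"
  unfolding covered_by_def
proof (intro ballI allI impI)
  fix C \<sigma> assume "C \<in> P" "ground_subst \<sigma>" "gsat I (subst_goal \<sigma> (bd C))"
  then show "bounded_instance I w P' (subst_hd \<sigma> (hd C)) 0 (goal_weight w (subst_goal \<sigma> (bd C)))"
    using assms by (cases "C \<in> P'") (auto intro: bounded_instanceI)
qed

lemma covered_by_subset: "P \<subseteq> P' \<Longrightarrow> covered_by I w P P'"
  by (rule covered_byI) auto

lemma bounded_instance_covered_by:
  "bounded_instance I w P A d b \<Longrightarrow> covered_by I w P P' \<Longrightarrow> bounded_instance I w P' A d b"
proof -
  assume "bounded_instance I w P A d b" "covered_by I w P P'"
  then obtain C \<sigma> where C: "C \<in> P" "ground_subst \<sigma>" "subst_hd \<sigma> (hd C) = A"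
    "gsat I (subst_goal \<sigma> (bd C))" "goal_weight w (subst_goal \<sigma> (bd C)) + d \<le> b"
    and "bounded_instance I w P' A 0 (goal_weight w (subst_goal \<sigma> (bd C)))"
    unfolding bounded_instance_def covered_by_def by blast
  then show ?thesis unfolding bounded_instance_def by fastforce
qed

definition body_preds :: "program \<Rightarrow> pred set" where
  "body_preds P = (\<Union>C\<in>P. gpreds (bd C))"

lemma body_preds_subsetI:
  "(\<And>C'. C' \<in> P' \<Longrightarrow> C' \<notin> P \<Longrightarrow> gpreds (bd C') \<subseteq> body_preds P) \<Longrightarrow> body_preds P' \<subseteq> body_preds P"
  unfolding body_preds_def by blast

lemma gpreds_subset_body_preds: "C \<in> P \<Longrightarrow> gpreds (bd C) \<subseteq> body_preds P"
  unfolding body_preds_def by blast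

section \<open>Subsumption, head generalization, case split, equation and disequation rules\<close>

lemma subsume_step_models: "models I P \<Longrightarrow> subsume_step P P' \<Longrightarrow> models I P'"
  by (auto simp: subsume_step_def models_def)

lemma subsume_step_covered_by: "subsume_step P P' \<Longrightarrow> covered_by I w P P'"
proof -
  assume "subsume_step P P'"
  then obtain C C' \<theta> G2 where C: "C \<in> P" "C \<noteq> C'"
    and C': "C' = subst_cl \<theta> (Cl (hd C) (bd C @ G2))" and P': "P' = P - {C'}"
    unfolding subsume_step_def subsumes_def by blast
  show ?thesis
  proof (rule covered_byI)
    fix D \<sigma> assume "D \<in> P" "D \<notin> P'" "ground_subst \<sigma>" "gsat I (subst_goal \<sigma> (bd D))"
    moreover have "D = C'" using P' \<open>D \<in> P\<close> \<open>D \<notin> P'\<close> by auto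
    ultimately show "bounded_instance I w P' (subst_hd \<sigma> (hd D)) 0 (goal_weight w (subst_goal \<sigma> (bd D)))"
      using C C' P'
      by (intro bounded_instanceI[of C _ "subst_comp \<sigma> \<theta>"])
         (auto simp: subst_hd_comp subst_goal_comp ground_subst_comp)
  qed
qed

lemma subsume_step_body_preds: "subsume_step P P' \<Longrightarrow> body_preds P' \<subseteq> body_preds P"
  by (auto simp: subsume_step_def body_preds_def)

lemma headgen_step_models: "models I P \<Longrightarrow> headgen_step P P' \<Longrightarrow> models I P'"
proof -
  assume m: "models I P" and "headgen_step P P'"
  then obtain C H X t where C: "C \<in> P" and hC: "hd C = subst_hd (Var(X := t)) H"
    and P': "P' = (P - {C}) \<union> {Cl H (Eq (Var X) t # bd C)}"
    unfolding headgen_step_def by blast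
  have "valid I (Cl H (Eq (Var X) t # bd C))"
  proof (rule validI)
    fix \<sigma> assume g: "ground_subst \<sigma>" and s: "gsat I (subst_goal \<sigma> (bd (Cl H (Eq (Var X) t # bd C))))"
    then have e: "\<sigma>(X := subst_tm \<sigma> t) = \<sigma>" and "gsat I (subst_goal \<sigma> (bd C))" by auto
    then have "subst_hd \<sigma> (hd C) \<in> I" using m C g by (auto simp: models_def)
    moreover have "subst_hd \<sigma> (hd C) = subst_hd \<sigma> H"
      using hC e by (simp add: subst_hd_comp subst_comp_upd)
    ultimately show "subst_hd \<sigma> (hd (Cl H (Eq (Var X) t # bd C))) \<in> I" by simp
  qed
  then show ?thesis using m P' by (auto simp: models_iff_valid)
qed

lemma headgen_step_covered_by: "headgen_step P P' \<Longrightarrow> covered_by I w P P'"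
proof -
  assume "headgen_step P P'"
  then obtain C H X t where X: "X \<in> hvars H" "X \<notin> cvars C"
    and hC: "hd C = subst_hd (Var(X := t)) H"
    and P': "P' = (P - {C}) \<union> {Cl H (Eq (Var X) t # bd C)}"
    unfolding headgen_step_def by blast
  have "tvars t \<subseteq> hvars (hd C)" using hC X(1) by (force simp: hvars_subst_hd)
  then have tX: "X \<notin> tvars t" using X(2) by (auto simp: cvars_def)
  show ?thesis
  proof (rule covered_byI)
    fix D \<sigma> assume "D \<in> P" "D \<notin> P'" and g: "ground_subst \<sigma>" and s: "gsat I (subst_goal \<sigma> (bd D))"
    then have D: "D = C" using P' by auto
    define \<sigma>' where "\<sigma>' = \<sigma>(X := subst_tm \<sigma> t)"
    have "ground_subst \<sigma>'" using g by (simp add: \<sigma>'_def ground_subst_upd ground_subst_tm)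
    moreover have "subst_tm \<sigma>' t = subst_tm \<sigma> t"
      using tX by (auto simp: \<sigma>'_def intro: subst_tm_cong)
    moreover have "subst_goal \<sigma>' (bd C) = subst_goal \<sigma> (bd C)"
      using X(2) by (auto simp: \<sigma>'_def cvars_def intro!: subst_goal_cong)
    moreover have "subst_hd \<sigma>' H = subst_hd \<sigma> (hd C)"
      using hC by (simp add: subst_hd_comp subst_comp_upd \<sigma>'_def)
    ultimately show "bounded_instance I w P' (subst_hd \<sigma> (hd D)) 0 (goal_weight w (subst_goal \<sigma> (bd D)))"
      using P' s D by (intro bounded_instanceI[of "Cl H (Eq (Var X) t # bd C)" _ \<sigma>']) (auto simp: \<sigma>'_def)
  qed
qed

lemma headgen_step_body_preds: "headgen_step P P' \<Longrightarrow> body_preds P' \<subseteq> body_preds P"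
  by (rule body_preds_subsetI) (auto simp: headgen_step_def body_preds_def)

lemma casesplit_step_models: "models I P \<Longrightarrow> casesplit_step P P' \<Longrightarrow> models I P'"
proof -
  assume m: "models I P" and "casesplit_step P P'"
  then obtain C X t where C: "C \<in> P"
    and P': "P' = (P - {C}) \<union> {subst_cl (Var(X := t)) C, Cl (hd C) (Neq (Var X) t # bd C)}"
    unfolding casesplit_step_def by blast
  have vC: "valid I C" using m C by (auto simp: models_iff_valid)
  then have "valid I (Cl (hd C) (Neq (Var X) t # bd C))" by (auto simp: valid_def)
  then show ?thesis using m P' valid_subst_cl[OF vC] by (auto simp: models_iff_valid)
qed

lemma casesplit_step_covered_by: "casesplit_step P P' \<Longrightarrow> covered_by I w P P'"
proof -
  assume "casesplit_step P P'"
  then obtain C X t where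
    P': "P' = (P - {C}) \<union> {subst_cl (Var(X := t)) C, Cl (hd C) (Neq (Var X) t # bd C)}"
    unfolding casesplit_step_def by blast
  show ?thesis
  proof (rule covered_byI)
    fix D \<sigma> assume "D \<in> P" "D \<notin> P'" and g: "ground_subst \<sigma>" and s: "gsat I (subst_goal \<sigma> (bd D))"
    then have D: "D = C" using P' by auto
    show "bounded_instance I w P' (subst_hd \<sigma> (hd D)) 0 (goal_weight w (subst_goal \<sigma> (bd D)))"
    proof (cases "\<sigma> X = subst_tm \<sigma> t")
      case True
      then have "subst_comp \<sigma> (Var(X := t)) = \<sigma>" by (auto simp: subst_comp_upd)
      then have "subst_cl \<sigma> (subst_cl (Var(X := t)) C) = subst_cl \<sigma> C" by (simp add: subst_cl_comp)
      then show ?thesis using P' g s D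
        by (intro bounded_instanceI[of "subst_cl (Var(X := t)) C" _ \<sigma>]) (auto simp: subst_cl_def)
    next
      case False
      then show ?thesis using P' g s D
        by (intro bounded_instanceI[of "Cl (hd C) (Neq (Var X) t # bd C)" _ \<sigma>]) auto
    qed
  qed
qed

lemma casesplit_step_body_preds: "casesplit_step P P' \<Longrightarrow> body_preds P' \<subseteq> body_preds P"
  by (rule body_preds_subsetI) (auto simp: casesplit_step_def body_preds_def subst_cl_def)

lemma eqelim_stepE:
  assumes "eqelim_step P P'"
  obtains C G1 t1 t2 G2 \<theta> where "C \<in> P" "bd C = G1 @ [Eq t1 t2] @ G2" "is_mgu \<theta> [t1] [t2]"
      "P' = (P - {C}) \<union> {subst_cl \<theta> (Cl (hd C) (G1 @ G2))}"
  | C G1 t1 t2 G2 where "C \<in> P" "bd C = G1 @ [Eq t1 t2] @ G2" "\<not> unifiable [t1] [t2]"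
      "P' = P - {C}"
proof -
  from assms obtain C G1 t1 t2 G2 where "C \<in> P" "bd C = G1 @ [Eq t1 t2] @ G2"
    and "if unifiable [t1] [t2]
         then (\<exists>\<theta>. is_mgu \<theta> [t1] [t2] \<and> P' = (P - {C}) \<union> {subst_cl \<theta> (Cl (hd C) (G1 @ G2))})
         else P' = P - {C}"
    unfolding eqelim_step_def by blast
  then show thesis using that by (cases "unifiable [t1] [t2]") auto
qed

lemma eqelim_step_models: "models I P \<Longrightarrow> eqelim_step P P' \<Longrightarrow> models I P'"
proof -
  assume m: "models I P" and "eqelim_step P P'"
  from this(2) show ?thesis
  proof (cases rule: eqelim_stepE)
    case (1 C G1 t1 t2 G2 \<theta>)
    have u: "subst_tm \<theta> t1 = subst_tm \<theta> t2" using mgu_unifier[OF 1(3)] by simp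
    have "valid I (subst_cl \<theta> (Cl (hd C) (G1 @ G2)))"
    proof (rule validI)
      fix \<tau> assume g: "ground_subst \<tau>" and s: "gsat I (subst_goal \<tau> (bd (subst_cl \<theta> (Cl (hd C) (G1 @ G2)))))"
      have "subst_tm (subst_comp \<tau> \<theta>) t1 = subst_tm (subst_comp \<tau> \<theta>) t2"
        using u by (metis subst_tm_comp)
      then have "gsat I (subst_goal (subst_comp \<tau> \<theta>) (bd C))"
        using s 1(2) by (simp add: subst_goal_comp)
      then have "subst_hd (subst_comp \<tau> \<theta>) (hd C) \<in> I"
        using m 1(1) ground_subst_comp[OF g] by (auto simp: models_def)
      then show "subst_hd \<tau> (hd (subst_cl \<theta> (Cl (hd C) (G1 @ G2)))) \<in> I"
        by (simp add: subst_hd_comp)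
    qed
    then show ?thesis using m 1(4) by (auto simp: models_iff_valid)
  next
    case (2 C G1 t1 t2 G2)
    then show ?thesis using m by (auto simp: models_def)
  qed
qed

lemma eqelim_step_covered_by: "eqelim_step P P' \<Longrightarrow> covered_by I w P P'"
proof (rule covered_byI)
  fix D \<sigma> assume "eqelim_step P P'" "D \<in> P" "D \<notin> P'"
    and g: "ground_subst \<sigma>" and s: "gsat I (subst_goal \<sigma> (bd D))"
  from this(1) show "bounded_instance I w P' (subst_hd \<sigma> (hd D)) 0 (goal_weight w (subst_goal \<sigma> (bd D)))"
  proof (cases rule: eqelim_stepE)
    case (1 C G1 t1 t2 G2 \<theta>)
    then have D: "D = C" using \<open>D \<in> P\<close> \<open>D \<notin> P'\<close> by auto
    then have "subst_tm \<sigma> t1 = subst_tm \<sigma> t2" using s 1(2) by simp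
    then obtain \<tau> where "ground_subst \<tau>" "subst_comp \<tau> \<theta> = \<sigma>"
      using ground_unifier_factors_mgu[OF 1(3) _ g] by auto
    then show ?thesis using 1 s D
      by (intro bounded_instanceI[of "subst_cl \<theta> (Cl (hd C) (G1 @ G2))" _ \<tau>])
         (auto simp: subst_hd_comp subst_goal_comp)
  next
    case (2 C G1 t1 t2 G2)
    then have "D = C" using \<open>D \<in> P\<close> \<open>D \<notin> P'\<close> by auto
    then have "subst_tm \<sigma> t1 = subst_tm \<sigma> t2" using s 2(2) by simp
    then show ?thesis using 2(3) by (auto simp: unifiable_def unifier_def)
  qed
qed

lemma eqelim_step_body_preds: "eqelim_step P P' \<Longrightarrow> body_preds P' \<subseteq> body_preds P"
  by (rule body_preds_subsetI, erule eqelim_stepE) (auto simp: body_preds_def)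

lemma diseq_stepE:
  assumes "diseq_step P P'"
  obtains C G1 t1 t2 G2 where "C \<in> P" "bd C = G1 @ [Neq t1 t2] @ G2" "\<not> unifiable [t1] [t2]"
          "P' = (P - {C}) \<union> {Cl (hd C) (G1 @ G2)}"
  | C G1 f ts us G2 where "C \<in> P" "bd C = G1 @ [Neq (Fn f ts) (Fn f us)] @ G2" "length ts = length us"
          "P' = (P - {C}) \<union> {Cl (hd C) (G1 @ [Neq (ts ! i) (us ! i)] @ G2) | i. i < length ts}"
  | C G1 X G2 where "C \<in> P" "bd C = G1 @ [Neq (Var X) (Var X)] @ G2" "P' = P - {C}"
  | C G1 t X G2 where "C \<in> P" "bd C = G1 @ [Neq t (Var X)] @ G2"
          "P' = (P - {C}) \<union> {Cl (hd C) (G1 @ [Neq (Var X) t] @ G2)}"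
  | C G1 X t1 G2 t2 G3 \<rho> where "C \<in> P" "bd C = G1 @ [Neq (Var X) t1] @ G2 @ [Neq (Var X) t2] @ G3"
          "bij_betw \<rho> (local_vars (hd C) G1 [Neq (Var X) t1] (G2 @ [Neq (Var X) t2] @ G3))
                     (local_vars (hd C) (G1 @ [Neq (Var X) t1] @ G2) [Neq (Var X) t2] G3)"
          "subst_tm (\<lambda>x. if x \<in> local_vars (hd C) G1 [Neq (Var X) t1] (G2 @ [Neq (Var X) t2] @ G3)
                         then Var (\<rho> x) else Var x) t1 = t2"
          "P' = (P - {C}) \<union> {Cl (hd C) (G1 @ [Neq (Var X) t1] @ G2 @ G3)}"
  using assms unfolding diseq_step_def Let_def
  apply (elim bexE disjE exE conjE)
      apply (rule that(1); assumption)
     apply (rule that(2); assumption)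
    apply (rule that(3); assumption)
   apply (rule that(4); assumption)
  apply (rule that(5); assumption)
  done

text \<open>Rule R9(5): if the two disequations are variants of each other up to their local
  variables, any ground instance satisfying the first one can be modified on the local
  variables of the second one so as to satisfy it too.\<close>
lemma valid_drop_variant_diseq:
  fixes H :: hatom and G1 G2 G3 :: goal and X :: nat and t1 t2 :: trm
  defines "L1 \<equiv> local_vars H G1 [Neq (Var X) t1] (G2 @ [Neq (Var X) t2] @ G3)"
    and "L2 \<equiv> local_vars H (G1 @ [Neq (Var X) t1] @ G2) [Neq (Var X) t2] G3"
  assumes v: "valid I (Cl H (G1 @ [Neq (Var X) t1] @ G2 @ [Neq (Var X) t2] @ G3))"
    and bij: "bij_betw \<rho> L1 L2"
    and r: "subst_tm (\<lambda>x. if x \<in> L1 then Var (\<rho> x) else Var x) t1 = t2"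
  shows "valid I (Cl H (G1 @ [Neq (Var X) t1] @ G2 @ G3))"
proof (rule validI)
  fix \<sigma> assume g: "ground_subst \<sigma>"
    and s: "gsat I (subst_goal \<sigma> (bd (Cl H (G1 @ [Neq (Var X) t1] @ G2 @ G3))))"
  define \<sigma>' where "\<sigma>' = (\<lambda>y. if y \<in> L2 then \<sigma> (inv_into L1 \<rho> y) else \<sigma> y)"
  have agree: "\<sigma>' y = \<sigma> y"
    if "y \<in> hvars H \<union> gvars G1 \<union> avars (Neq (Var X) t1) \<union> gvars G2 \<union> gvars G3" for y
    using that by (auto simp: \<sigma>'_def L2_def local_vars_def)
  have "subst_tm \<sigma>' t2 = subst_tm (subst_comp \<sigma>' (\<lambda>x. if x \<in> L1 then Var (\<rho> x) else Var x)) t1"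
    using r by (metis subst_tm_comp)
  also have "\<dots> = subst_tm \<sigma> t1"
  proof (rule subst_tm_cong)
    fix x assume x: "x \<in> tvars t1"
    show "subst_comp \<sigma>' (\<lambda>x. if x \<in> L1 then Var (\<rho> x) else Var x) x = \<sigma> x"
    proof (cases "x \<in> L1")
      case True
      then have "\<rho> x \<in> L2" "inv_into L1 \<rho> (\<rho> x) = x"
        using bij by (auto simp: bij_betw_def inv_into_f_f)
      then show ?thesis using True by (simp add: subst_comp_def \<sigma>'_def)
    next
      case False
      then show ?thesis using agree[of x] x by (simp add: subst_comp_def)
    qed
  qed
  finally have "subst_tm \<sigma>' t2 = subst_tm \<sigma> t1" .
  moreover have "subst_goal \<sigma>' G = subst_goal \<sigma> G" if "G \<in> {G1, G2, G3}" for G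
    using that agree by (intro subst_goal_cong) auto
  moreover have "subst_tm \<sigma>' t1 = subst_tm \<sigma> t1" "\<sigma>' X = \<sigma> X"
    using agree by (auto intro: subst_tm_cong)
  ultimately have "gsat I (subst_goal \<sigma>' (G1 @ [Neq (Var X) t1] @ G2 @ [Neq (Var X) t2] @ G3))"
    using s by simp
  moreover have "ground_subst \<sigma>'" using g by (auto simp: ground_subst_def \<sigma>'_def)
  ultimately have "subst_hd \<sigma>' H \<in> I" using validD[OF v] by simp
  moreover have "subst_hd \<sigma>' H = subst_hd \<sigma> H" using agree by (intro subst_hd_cong) auto
  ultimately show "subst_hd \<sigma> (hd (Cl H (G1 @ [Neq (Var X) t1] @ G2 @ G3))) \<in> I" by simp
qed

lemma diseq_step_models: "models I P \<Longrightarrow> diseq_step P P' \<Longrightarrow> models I P'"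
proof -
  assume m: "models I P" and "diseq_step P P'"
  have vC: "C \<in> P \<Longrightarrow> valid I C" for C using m by (auto simp: models_iff_valid)
  from \<open>diseq_step P P'\<close> show ?thesis
  proof (cases rule: diseq_stepE)
    case (1 C G1 t1 t2 G2)
    have "valid I (Cl (hd C) (G1 @ G2))"
    proof (rule validI)
      fix \<sigma> assume "ground_subst \<sigma>" "gsat I (subst_goal \<sigma> (bd (Cl (hd C) (G1 @ G2))))"
      moreover have "subst_tm \<sigma> t1 \<noteq> subst_tm \<sigma> t2"
        using 1(3) by (auto simp: unifiable_def unifier_def)
      ultimately show "subst_hd \<sigma> (hd (Cl (hd C) (G1 @ G2))) \<in> I"
        using validD[OF vC[OF 1(1)]] 1(2) by simp
    qed
    then show ?thesis using m 1(4) by (auto simp: models_iff_valid)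
  next
    case (2 C G1 f ts us G2)
    have "valid I (Cl (hd C) (G1 @ [Neq (ts ! i) (us ! i)] @ G2))" if i: "i < length ts" for i
    proof (rule validI)
      fix \<sigma> assume "ground_subst \<sigma>"
        and s: "gsat I (subst_goal \<sigma> (bd (Cl (hd C) (G1 @ [Neq (ts ! i) (us ! i)] @ G2))))"
      moreover from s have "subst_tm \<sigma> (ts ! i) \<noteq> subst_tm \<sigma> (us ! i)" by simp
      then have "map (subst_tm \<sigma>) ts \<noteq> map (subst_tm \<sigma>) us" using i 2(3) by (metis nth_map)
      ultimately show "subst_hd \<sigma> (hd (Cl (hd C) (G1 @ [Neq (ts ! i) (us ! i)] @ G2))) \<in> I"
        using validD[OF vC[OF 2(1)]] 2(2) by simp
    qed
    then show ?thesis using m 2(4) by (auto simp: models_iff_valid)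
  next
    case (3 C G1 X G2)
    then show ?thesis using m by (auto simp: models_def)
  next
    case (4 C G1 t X G2)
    have "valid I (Cl (hd C) (G1 @ [Neq (Var X) t] @ G2))"
      using vC[OF 4(1)] 4(2) by (auto simp: valid_def)
    then show ?thesis using m 4(3) by (auto simp: models_iff_valid)
  next
    case (5 C G1 X t1 G2 t2 G3 \<rho>)
    have "valid I (Cl (hd C) (G1 @ [Neq (Var X) t1] @ G2 @ [Neq (Var X) t2] @ G3))"
      using vC[OF 5(1)] 5(2) by (metis clause.collapse)
    then have "valid I (Cl (hd C) (G1 @ [Neq (Var X) t1] @ G2 @ G3))"
      using 5(3,4) by (rule valid_drop_variant_diseq)
    then show ?thesis using m 5(5) by (auto simp: models_iff_valid)
  qed
qed

lemma diseq_step_covered_by: "diseq_step P P' \<Longrightarrow> covered_by I w P P'"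
proof (rule covered_byI)
  fix D \<sigma> assume "diseq_step P P'" "D \<in> P" "D \<notin> P'"
    and g: "ground_subst \<sigma>" and s: "gsat I (subst_goal \<sigma> (bd D))"
  from this(1) show "bounded_instance I w P' (subst_hd \<sigma> (hd D)) 0 (goal_weight w (subst_goal \<sigma> (bd D)))"
  proof (cases rule: diseq_stepE)
    case (1 C G1 t1 t2 G2)
    then show ?thesis using \<open>D \<in> P\<close> \<open>D \<notin> P'\<close> g s
      by (intro bounded_instanceI[of "Cl (hd C) (G1 @ G2)" _ \<sigma>]) auto
  next
    case (2 C G1 f ts us G2)
    then have "map (subst_tm \<sigma>) ts \<noteq> map (subst_tm \<sigma>) us" using \<open>D \<in> P\<close> \<open>D \<notin> P'\<close> s by auto
    then obtain i where i: "i < length ts" "subst_tm \<sigma> (ts ! i) \<noteq> subst_tm \<sigma> (us ! i)"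
      using 2(3) by (metis list_eq_iff_nth_eq length_map nth_map)
    then show ?thesis using 2 \<open>D \<in> P\<close> \<open>D \<notin> P'\<close> g s
      by (intro bounded_instanceI[of "Cl (hd C) (G1 @ [Neq (ts ! i) (us ! i)] @ G2)" _ \<sigma>]) auto
  next
    case (3 C G1 X G2)
    then show ?thesis using \<open>D \<in> P\<close> \<open>D \<notin> P'\<close> s by auto
  next
    case (4 C G1 t X G2)
    then show ?thesis using \<open>D \<in> P\<close> \<open>D \<notin> P'\<close> g s
      by (intro bounded_instanceI[of "Cl (hd C) (G1 @ [Neq (Var X) t] @ G2)" _ \<sigma>]) auto
  next
    case (5 C G1 X t1 G2 t2 G3 \<rho>)
    then show ?thesis using \<open>D \<in> P\<close> \<open>D \<notin> P'\<close> g s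
      by (intro bounded_instanceI[of "Cl (hd C) (G1 @ [Neq (Var X) t1] @ G2 @ G3)" _ \<sigma>]) auto
  qed
qed

lemma diseq_step_body_preds: "diseq_step P P' \<Longrightarrow> body_preds P' \<subseteq> body_preds P"
proof (rule body_preds_subsetI)
  fix C' assume "diseq_step P P'" "C' \<in> P'" "C' \<notin> P"
  from this(1) show "gpreds (bd C') \<subseteq> body_preds P"
    by (cases rule: diseq_stepE) (use \<open>C' \<in> P'\<close> \<open>C' \<notin> P\<close> in \<open>auto dest!: gpreds_subset_body_preds\<close>)
qed

section \<open>Unfolding\<close>

lemma unfold_stepE:
  assumes "unfold_step P C P'"
  obtains G1 A G2 \<rho> \<sigma> where "C \<in> P" "bd C = G1 @ [A] @ G2" "is_nonbasic A"
    "\<forall>D\<in>P. inj (\<rho> D) \<and> cvars (subst_cl (ren (\<rho> D)) D) \<inter> cvars C = {}"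
    "\<forall>D\<in>P. hunifiable A (hd (subst_cl (ren (\<rho> D)) D)) \<longrightarrow>
                 is_hmgu (\<sigma> D) A (hd (subst_cl (ren (\<rho> D)) D))"
    "P' = (P - {C}) \<union>
             {subst_cl (\<sigma> D) (Cl (hd C) (G1 @ bd (subst_cl (ren (\<rho> D)) D) @ G2)) | D.
                D \<in> P \<and> hunifiable A (hd (subst_cl (ren (\<rho> D)) D))}"
  using assms unfolding unfold_step_def by blast

lemma unfold_step_models:
  assumes m: "models I P" and u: "unfold_step P C P'"
  shows "models I P'"
  using u
proof (cases rule: unfold_stepE)
  case (1 G1 A G2 \<rho> \<mu>)
  have "valid I (subst_cl (\<mu> D) (Cl (hd C) (G1 @ bd R @ G2)))"
    if D: "D \<in> P" and R: "R = subst_cl (ren (\<rho> D)) D" and hu: "hunifiable A (hd R)" for D R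
  proof (rule validI)
    have "is_hmgu (\<mu> D) A (hd R)" using 1(5) D R hu by blast
    then obtain us where A: "A = Rel (fst (hd R)) us" and mgu: "is_mgu (\<mu> D) us (snd (hd R))"
      by (auto simp: is_hmgu_def)
    have un: "map (subst_tm (\<mu> D)) us = map (subst_tm (\<mu> D)) (snd (hd R))"
      using mgu by (rule mgu_unifier)
    fix \<tau> assume g: "ground_subst \<tau>"
      and s: "gsat I (subst_goal \<tau> (bd (subst_cl (\<mu> D) (Cl (hd C) (G1 @ bd R @ G2)))))"
    define \<gamma> where "\<gamma> = subst_comp \<tau> (\<mu> D)"
    have g\<gamma>: "ground_subst \<gamma>" using g by (simp add: \<gamma>_def ground_subst_comp)
    from s have s\<gamma>: "gsat I (subst_goal \<gamma> G1)" "gsat I (subst_goal \<gamma> (bd R))" "gsat I (subst_goal \<gamma> G2)"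
      by (auto simp: subst_goal_comp \<gamma>_def)
    have "valid I R" using m D R valid_subst_cl by (auto simp: models_iff_valid)
    then have "subst_hd \<gamma> (hd R) \<in> I" using g\<gamma> s\<gamma>(2) by (rule validD)
    moreover have "map (subst_tm \<gamma>) us = map (subst_tm \<gamma>) (snd (hd R))"
      using arg_cong[OF un, of "map (subst_tm \<tau>)"] unfolding map_subst_tm_comp \<gamma>_def .
    ultimately have "hsat I (subst_at \<gamma> A)" using A by (auto simp: subst_hd_def)
    then have "subst_hd \<gamma> (hd C) \<in> I"
      using m 1(1,2) g\<gamma> s\<gamma> by (auto simp: models_def)
    then show "subst_hd \<tau> (hd (subst_cl (\<mu> D) (Cl (hd C) (G1 @ bd R @ G2)))) \<in> I"
      by (simp add: subst_hd_comp \<gamma>_def)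
  qed
  then show ?thesis using m 1(6) by (auto simp: models_iff_valid)
qed

lemma renamed_apart_instances:
  assumes "inj \<rho>" "cvars (subst_cl (ren \<rho>) D) \<inter> cvars C = {}"
    and "ground_subst \<sigma>" "ground_subst \<sigma>D"
  obtains \<gamma> where "ground_subst \<gamma>" "\<And>x. x \<in> cvars C \<Longrightarrow> \<gamma> x = \<sigma> x"
    "subst_cl \<gamma> (subst_cl (ren \<rho>) D) = subst_cl \<sigma>D D"
proof
  define R where "R = subst_cl (ren \<rho>) D"
  define \<gamma> where "\<gamma> = (\<lambda>y. if y \<in> cvars R then unrename \<rho> \<sigma>D y else \<sigma> y)"
  show "ground_subst \<gamma>"
    using assms(3,4) ground_subst_unrename[OF assms(4)] by (auto simp: ground_subst_def \<gamma>_def)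
  show "\<gamma> x = \<sigma> x" if "x \<in> cvars C" for x
    using assms(2) that by (auto simp: \<gamma>_def R_def)
  have "subst_cl \<gamma> R = subst_cl (unrename \<rho> \<sigma>D) R"
    by (rule subst_cl_cong) (simp add: \<gamma>_def)
  then show "subst_cl \<gamma> (subst_cl (ren \<rho>) D) = subst_cl \<sigma>D D"
    using subst_cl_unrename[OF assms(1)] by (simp add: R_def)
qed

lemma unfold_step_bounded_instance:
  assumes u: "unfold_step P C P'" and g: "ground_subst \<sigma>" and s: "gsat I (subst_goal \<sigma> (bd C))"
    and W: "\<And>p ts. Rel p ts \<in> set (bd C) \<Longrightarrow>
      bounded_instance I w P (p, map (subst_tm \<sigma>) ts) d (w (p, map (subst_tm \<sigma>) ts))"
  shows "bounded_instance I w P' (subst_hd \<sigma> (hd C)) d (goal_weight w (subst_goal \<sigma> (bd C)))"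
  using u
proof (cases rule: unfold_stepE)
  case (1 G1 A G2 \<rho> \<mu>)
  obtain q us where A: "A = Rel q us" using 1(3) by (auto simp: is_nonbasic_def)
  obtain D \<sigma>D where D: "D \<in> P" "ground_subst \<sigma>D"
    and hD: "subst_hd \<sigma>D (hd D) = (q, map (subst_tm \<sigma>) us)" and sD: "gsat I (subst_goal \<sigma>D (bd D))"
    and wD: "goal_weight w (subst_goal \<sigma>D (bd D)) + d \<le> w (q, map (subst_tm \<sigma>) us)"
    using W[of q us] 1(2) A by (auto simp: bounded_instance_def)
  define R where "R = subst_cl (ren (\<rho> D)) D"
  obtain \<gamma> where g\<gamma>: "ground_subst \<gamma>" and \<gamma>C: "\<And>x. x \<in> cvars C \<Longrightarrow> \<gamma> x = \<sigma> x"
    and \<gamma>R: "subst_cl \<gamma> R = subst_cl \<sigma>D D"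
    using renamed_apart_instances[of "\<rho> D" D C \<sigma> \<sigma>D] 1(4) D g by (auto simp: R_def)
  have \<gamma>C': "subst_goal \<gamma> G1 = subst_goal \<sigma> G1" "subst_goal \<gamma> G2 = subst_goal \<sigma> G2"
    "map (subst_tm \<gamma>) us = map (subst_tm \<sigma>) us" "subst_hd \<gamma> (hd C) = subst_hd \<sigma> (hd C)"
    by (rule subst_goal_cong subst_goal_cong map_subst_tm_cong subst_hd_cong;
        use \<gamma>C 1(2) A in \<open>auto simp: cvars_def\<close>)+
  have hR: "subst_hd \<gamma> (hd R) = (q, map (subst_tm \<sigma>) us)"
    using arg_cong[OF \<gamma>R, of hd] hD by simp
  then have un: "map (subst_tm \<gamma>) us = map (subst_tm \<gamma>) (snd (hd R))"
    using \<gamma>C' by (simp add: subst_hd_def)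
  have "unifiable us (snd (hd R))" using un by (auto simp: unifiable_def unifier_def)
  moreover have "fst (hd R) = q" using hR by (simp add: subst_hd_def)
  ultimately have hu: "hunifiable A (hd R)" using A by (simp add: hunifiable_def)
  then have "is_mgu (\<mu> D) us (snd (hd R))" using 1(5) D A R_def by (auto simp: is_hmgu_def)
  then obtain \<tau> where g\<tau>: "ground_subst \<tau>" and \<tau>: "subst_comp \<tau> (\<mu> D) = \<gamma>"
    using ground_unifier_factors_mgu[OF _ un g\<gamma>] by blast
  define C' where "C' = subst_cl (\<mu> D) (Cl (hd C) (G1 @ bd R @ G2))"
  have "C' \<in> P'" using 1(6) D hu by (auto simp: C'_def R_def)
  moreover have "subst_hd \<tau> (hd C') = subst_hd \<sigma> (hd C)"
    using \<gamma>C' \<tau> by (simp add: C'_def subst_hd_comp)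
  moreover have "subst_goal \<tau> (bd C') = subst_goal \<sigma> G1 @ subst_goal \<sigma>D (bd D) @ subst_goal \<sigma> G2"
    using \<tau> arg_cong[OF \<gamma>R, of bd] \<gamma>C' by (simp add: C'_def subst_goal_comp)
  ultimately show ?thesis
    using g\<tau> s sD wD 1(2) A by (intro bounded_instanceI[of C' _ \<tau>]) auto
qed

lemma unfold_step_body_preds: "unfold_step P C P' \<Longrightarrow> body_preds P' \<subseteq> body_preds P"
proof (rule body_preds_subsetI)
  fix C' assume "unfold_step P C P'" "C' \<in> P'" "C' \<notin> P"
  from this(1) show "gpreds (bd C') \<subseteq> body_preds P"
  proof (cases rule: unfold_stepE)
    case (1 G1 A G2 \<rho> \<mu>)
    then obtain D where "D \<in> P"
      and "C' = subst_cl (\<mu> D) (Cl (hd C) (G1 @ bd (subst_cl (ren (\<rho> D)) D) @ G2))"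
      using \<open>C' \<in> P'\<close> \<open>C' \<notin> P\<close> by blast
    then show ?thesis using 1(1,2) gpreds_subset_body_preds[of _ P] by fastforce
  qed
qed

section \<open>Folding\<close>

lemma fold_stepE:
  assumes "fold_step Defs P newp P'" and "Ds = {D\<in>Defs. hpred (hd D) = newp}"
  obtains H G1 G2 \<theta> Cf \<rho> where
    "Ds \<noteq> {}"
    "\<forall>D\<in>Ds. Cf D \<in> P \<and> inj (\<rho> D) \<and>
           subst_cl (ren (\<rho> D)) (Cf D) = Cl H (G1 @ subst_goal \<theta> (bd D) @ G2)"
    "\<forall>D\<in>Ds. \<forall>X\<in>gvars (bd D). X \<notin> hvars (hd D) \<longrightarrow>
           (\<exists>Z. \<theta> X = Var Z \<and> Z \<notin> hvars H \<union> gvars G1 \<union> gvars G2 \<and>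
                (\<forall>Y\<in>gvars (bd D). Y \<noteq> X \<longrightarrow> Z \<notin> tvars (\<theta> Y)))"
    "\<forall>D\<in>Ds. P' = (P - Cf ` Ds) \<union>
        {Cl H (G1 @ [Rel (fst newp) (map (subst_tm \<theta>) (snd (hd D)))] @ G2)}"
proof -
  from assms have "Ds \<noteq> {} \<and>
     (\<exists>H G1 G2 \<theta> Cf \<rho>.
        (\<forall>D\<in>Ds. Cf D \<in> P \<and> inj (\<rho> D) \<and>
           subst_cl (ren (\<rho> D)) (Cf D) = Cl H (G1 @ subst_goal \<theta> (bd D) @ G2)) \<and>
        (\<forall>D\<in>Ds. \<forall>X\<in>gvars (bd D). X \<notin> hvars (hd D) \<longrightarrow>
           (\<exists>Z. \<theta> X = Var Z \<and> Z \<notin> hvars H \<union> gvars G1 \<union> gvars G2 \<and>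
                (\<forall>Y\<in>gvars (bd D). Y \<noteq> X \<longrightarrow> Z \<notin> tvars (\<theta> Y)))) \<and>
        (\<forall>D\<in>Ds. P' = (P - Cf ` Ds) \<union>
           {Cl H (G1 @ [Rel (fst newp) (map (subst_tm \<theta>) (snd (hd D)))] @ G2)}))"
    unfolding fold_step_def Let_def by simp
  then show thesis using that by (elim conjE exE) assumption
qed

text \<open>By R4, theta maps each variable X of the body that is not in the head to a variable of
  its own that is fresh for the context V; sending that variable to tau X, and every other
  variable to its sigma value, gives the required substitution.\<close>
lemma fold_body_instance:
  assumes loc: "\<forall>X\<in>gvars (bd D). X \<notin> hvars (hd D) \<longrightarrow>
           (\<exists>Z. \<theta> X = Var Z \<and> Z \<notin> V \<and> (\<forall>Y\<in>gvars (bd D). Y \<noteq> X \<longrightarrow> Z \<notin> tvars (\<theta> Y)))"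
    and head: "\<And>Y. Y \<in> hvars (hd D) \<Longrightarrow> \<tau> Y = subst_tm \<sigma> (\<theta> Y)"
    and g: "ground_subst \<sigma>" "ground_subst \<tau>"
  obtains \<sigma>' where "ground_subst \<sigma>'" "\<And>z. z \<in> V \<Longrightarrow> \<sigma>' z = \<sigma> z"
    "subst_goal \<sigma>' (subst_goal \<theta> (bd D)) = subst_goal \<tau> (bd D)"
proof
  define L where "L = {X \<in> gvars (bd D). X \<notin> hvars (hd D)}"
  have fresh: "z \<notin> V" if "X \<in> L" "\<theta> X = Var z" for X z
    using loc that by (auto simp: L_def)
  have own: "Y = X"
    if XY: "X \<in> L" "Y \<in> gvars (bd D)" "\<theta> X = Var z" "z \<in> tvars (\<theta> Y)" for X Y z
  proof (rule ccontr)
    assume "Y \<noteq> X"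
    obtain Z where "\<theta> X = Var Z" "\<forall>Y'\<in>gvars (bd D). Y' \<noteq> X \<longrightarrow> Z \<notin> tvars (\<theta> Y')"
      using loc XY(1) by (auto simp: L_def)
    then show False using XY(2-4) \<open>Y \<noteq> X\<close> by auto
  qed
  define \<sigma>' where
    "\<sigma>' = (\<lambda>z. if \<exists>X\<in>L. \<theta> X = Var z then \<tau> (SOME X. X \<in> L \<and> \<theta> X = Var z) else \<sigma> z)"
  show "ground_subst \<sigma>'" using g by (auto simp: ground_subst_def \<sigma>'_def)
  show "\<sigma>' z = \<sigma> z" if "z \<in> V" for z
  proof -
    have "\<not> (\<exists>X\<in>L. \<theta> X = Var z)" using fresh that by blast
    then show ?thesis by (simp add: \<sigma>'_def)
  qed
  have "subst_tm \<sigma>' (\<theta> Y) = \<tau> Y" if Y: "Y \<in> gvars (bd D)" for Y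
  proof (cases "Y \<in> L")
    case True
    then obtain Z where Z: "\<theta> Y = Var Z" using loc by (auto simp: L_def)
    have "X = Y" if "X \<in> L" "\<theta> X = Var Z" for X
      using own[OF that(1) Y that(2)] Z by simp
    then have "(SOME X. X \<in> L \<and> \<theta> X = Var Z) = Y"
      using True Z by (blast intro: some_equality)
    moreover have "\<exists>X\<in>L. \<theta> X = Var Z" using True Z by blast
    ultimately show ?thesis using Z by (simp add: \<sigma>'_def)
  next
    case False
    then have "Y \<in> hvars (hd D)" using Y by (auto simp: L_def)
    moreover have "subst_tm \<sigma>' (\<theta> Y) = subst_tm \<sigma> (\<theta> Y)"
    proof (rule subst_tm_cong)
      fix z assume "z \<in> tvars (\<theta> Y)"
      then have "\<not> (\<exists>X\<in>L. \<theta> X = Var z)" using own[of _ Y z] False Y by blast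
      then show "\<sigma>' z = \<sigma> z" by (simp add: \<sigma>'_def)
    qed
    ultimately show ?thesis using head by simp
  qed
  then show "subst_goal \<sigma>' (subst_goal \<theta> (bd D)) = subst_goal \<tau> (bd D)"
    unfolding subst_goal_comp by (intro subst_goal_cong) (simp add: subst_comp_def)
qed

lemma fold_step_models:
  assumes f: "fold_step Defs P newp P'" and m: "models I P"
    and supp: "\<And>N. N \<in> I \<Longrightarrow> hpred N = newp \<Longrightarrow> \<exists>D\<in>Defs. hpred (hd D) = newp \<and>
                 (\<exists>\<tau>. ground_subst \<tau> \<and> subst_hd \<tau> (hd D) = N \<and> gsat I (subst_goal \<tau> (bd D)))"
    and same_hd: "\<And>D1 D2. D1 \<in> Defs \<Longrightarrow> D2 \<in> Defs \<Longrightarrow> hpred (hd D1) = newp \<Longrightarrow>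
                    hpred (hd D2) = newp \<Longrightarrow> hd D1 = hd D2"
  shows "models I P'"
proof -
  define Ds where "Ds = {D\<in>Defs. hpred (hd D) = newp}"
  obtain H G1 G2 \<theta> Cf \<rho> where ne: "Ds \<noteq> {}"
    and cf: "\<forall>D\<in>Ds. Cf D \<in> P \<and> inj (\<rho> D) \<and>
           subst_cl (ren (\<rho> D)) (Cf D) = Cl H (G1 @ subst_goal \<theta> (bd D) @ G2)"
    and loc: "\<forall>D\<in>Ds. \<forall>X\<in>gvars (bd D). X \<notin> hvars (hd D) \<longrightarrow>
           (\<exists>Z. \<theta> X = Var Z \<and> Z \<notin> hvars H \<union> gvars G1 \<union> gvars G2 \<and>
                (\<forall>Y\<in>gvars (bd D). Y \<noteq> X \<longrightarrow> Z \<notin> tvars (\<theta> Y)))"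
    and P': "\<forall>D\<in>Ds. P' = (P - Cf ` Ds) \<union> {Cl H (G1 @ [Rel (fst newp) (map (subst_tm \<theta>) (snd (hd D)))] @ G2)}"
    by (rule fold_stepE[OF f Ds_def])
  obtain D0 where D0: "D0 \<in> Ds" using ne by blast
  define E where "E = Cl H (G1 @ [Rel (fst newp) (map (subst_tm \<theta>) (snd (hd D0)))] @ G2)"
  have "valid I E"
  proof (rule validI)
    fix \<sigma> assume g: "ground_subst \<sigma>" and s: "gsat I (subst_goal \<sigma> (bd E))"
    define N where "N = (fst newp, map (subst_tm \<sigma>) (map (subst_tm \<theta>) (snd (hd D0))))"
    have sG: "gsat I (subst_goal \<sigma> G1)" "gsat I (subst_goal \<sigma> G2)" and "N \<in> I"
      using s by (auto simp: E_def N_def)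
    moreover have "hpred N = newp" using D0 by (cases newp) (auto simp: N_def hpred_def Ds_def)
    ultimately obtain D \<tau> where D: "D \<in> Ds" and g\<tau>: "ground_subst \<tau>"
      and hD: "subst_hd \<tau> (hd D) = N" and sD: "gsat I (subst_goal \<tau> (bd D))"
      using supp unfolding Ds_def by blast
    have "hd D = hd D0" using same_hd D D0 by (auto simp: Ds_def)
    then have "map (subst_tm \<tau>) (snd (hd D)) = map (subst_tm (subst_comp \<sigma> \<theta>)) (snd (hd D))"
      using hD by (simp add: N_def subst_hd_def map_subst_tm_comp)
    then have "\<tau> Y = subst_tm \<sigma> (\<theta> Y)" if "Y \<in> hvars (hd D)" for Y
      using that subst_tm_eq_imp_agree
      by (fastforce simp: hvars_def tsvars_def map_eq_conv subst_comp_def)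
    then obtain \<sigma>' where g': "ground_subst \<sigma>'"
      and agree: "\<And>z. z \<in> hvars H \<union> gvars G1 \<union> gvars G2 \<Longrightarrow> \<sigma>' z = \<sigma> z"
      and body: "subst_goal \<sigma>' (subst_goal \<theta> (bd D)) = subst_goal \<tau> (bd D)"
      using fold_body_instance[of D \<theta> "hvars H \<union> gvars G1 \<union> gvars G2" \<tau> \<sigma>] loc D g g\<tau> by blast
    have "valid I (Cl H (G1 @ subst_goal \<theta> (bd D) @ G2))"
      using cf D m valid_subst_cl[of I "Cf D" "ren (\<rho> D)"] by (auto simp: models_iff_valid)
    moreover have "subst_goal \<sigma>' G1 = subst_goal \<sigma> G1" "subst_goal \<sigma>' G2 = subst_goal \<sigma> G2"
      using agree by (auto intro!: subst_goal_cong)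
    ultimately have "subst_hd \<sigma>' H \<in> I" using validD g' sG body sD by fastforce
    moreover have "subst_hd \<sigma>' H = subst_hd \<sigma> H" using agree by (auto intro!: subst_hd_cong)
    ultimately show "subst_hd \<sigma> (hd E) \<in> I" by (simp add: E_def)
  qed
  then show ?thesis using m P' D0 by (auto simp: models_iff_valid E_def)
qed

lemma fold_step_covered_by:
  assumes f: "fold_step Defs P newp P'"
    and def_weight: "\<And>D \<tau>. D \<in> Defs \<Longrightarrow> ground_subst \<tau> \<Longrightarrow> gsat I (subst_goal \<tau> (bd D)) \<Longrightarrow>
               subst_hd \<tau> (hd D) \<in> I \<and> w (subst_hd \<tau> (hd D)) \<le> goal_weight w (subst_goal \<tau> (bd D))"
  shows "covered_by I w P P'"
proof -
  define Ds where "Ds = {D\<in>Defs. hpred (hd D) = newp}"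
  obtain H G1 G2 \<theta> Cf \<rho> where ne: "Ds \<noteq> {}"
    and cf: "\<forall>D\<in>Ds. Cf D \<in> P \<and> inj (\<rho> D) \<and>
           subst_cl (ren (\<rho> D)) (Cf D) = Cl H (G1 @ subst_goal \<theta> (bd D) @ G2)"
    and P': "\<forall>D\<in>Ds. P' = (P - Cf ` Ds) \<union> {Cl H (G1 @ [Rel (fst newp) (map (subst_tm \<theta>) (snd (hd D)))] @ G2)}"
    by (rule fold_stepE[OF f Ds_def])
  show ?thesis
  proof (rule covered_byI)
    fix C \<sigma> assume C: "C \<in> P" "C \<notin> P'" and g: "ground_subst \<sigma>" and s: "gsat I (subst_goal \<sigma> (bd C))"
    obtain D0 where "D0 \<in> Ds" using ne by blast
    then have "C \<in> Cf ` Ds" using C P' by blast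
    then obtain D where D: "D \<in> Ds" and CD: "C = Cf D" by blast
    define \<sigma>r where "\<sigma>r = unrename (\<rho> D) \<sigma>"
    have inst: "subst_cl \<sigma>r (Cl H (G1 @ subst_goal \<theta> (bd D) @ G2)) = subst_cl \<sigma> C"
      using cf D CD subst_cl_unrename[of "\<rho> D" \<sigma> C] by (simp add: \<sigma>r_def)
    define \<tau> where "\<tau> = subst_comp \<sigma>r \<theta>"
    have gr: "ground_subst \<sigma>r" "ground_subst \<tau>"
      using g by (simp_all add: \<sigma>r_def \<tau>_def ground_subst_unrename ground_subst_comp)
    have bC: "subst_goal \<sigma> (bd C) = subst_goal \<sigma>r G1 @ subst_goal \<tau> (bd D) @ subst_goal \<sigma>r G2"
      using arg_cong[OF inst, of bd] by (simp add: subst_goal_comp \<tau>_def)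
    have "subst_hd \<tau> (hd D) = (fst newp, map (subst_tm \<sigma>r) (map (subst_tm \<theta>) (snd (hd D))))"
      using D by (auto simp: subst_hd_def \<tau>_def map_subst_tm_comp hpred_def Ds_def)
    moreover have "subst_hd \<tau> (hd D) \<in> I \<and> w (subst_hd \<tau> (hd D)) \<le> goal_weight w (subst_goal \<tau> (bd D))"
      using def_weight D gr s bC by (auto simp: Ds_def)
    moreover have "Cl H (G1 @ [Rel (fst newp) (map (subst_tm \<theta>) (snd (hd D)))] @ G2) \<in> P'"
      using P' D by blast
    ultimately show "bounded_instance I w P' (subst_hd \<sigma> (hd C)) 0 (goal_weight w (subst_goal \<sigma> (bd C)))"
      using gr s bC arg_cong[OF inst, of hd]
      by (intro bounded_instanceI[OF _ gr(1)]) auto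
  qed
qed

lemma fold_step_body_preds: "fold_step Defs P newp P' \<Longrightarrow> body_preds P' \<subseteq> body_preds P \<union> {newp}"
proof -
  assume f: "fold_step Defs P newp P'"
  define Ds where "Ds = {D\<in>Defs. hpred (hd D) = newp}"
  obtain H G1 G2 \<theta> Cf \<rho> where ne: "Ds \<noteq> {}"
    and cf: "\<forall>D\<in>Ds. Cf D \<in> P \<and> inj (\<rho> D) \<and>
           subst_cl (ren (\<rho> D)) (Cf D) = Cl H (G1 @ subst_goal \<theta> (bd D) @ G2)"
    and P': "\<forall>D\<in>Ds. P' = (P - Cf ` Ds) \<union> {Cl H (G1 @ [Rel (fst newp) (map (subst_tm \<theta>) (snd (hd D)))] @ G2)}"
    by (rule fold_stepE[OF f Ds_def])
  obtain D where D: "D \<in> Ds" using ne by blast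
  have eq: "subst_cl (ren (\<rho> D)) (Cf D) = Cl H (G1 @ subst_goal \<theta> (bd D) @ G2)"
    using cf D by blast
  have "gpreds (bd (Cf D)) = gpreds (bd (subst_cl (ren (\<rho> D)) (Cf D)))" by simp
  also have "\<dots> = gpreds G1 \<union> gpreds (bd D) \<union> gpreds G2" unfolding eq by auto
  finally have "gpreds (bd (Cf D)) = gpreds G1 \<union> gpreds (bd D) \<union> gpreds G2" .
  then have "gpreds G1 \<union> gpreds G2 \<subseteq> body_preds P"
    using gpreds_subset_body_preds[of "Cf D" P] cf D by auto
  moreover have "apred (Rel (fst newp) (map (subst_tm \<theta>) (snd (hd D)))) = {newp}"
    using D by (cases newp) (auto simp: Ds_def hpred_def)
  ultimately show ?thesis using P' D by (auto simp: body_preds_def)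
qed

section \<open>Definition elimination\<close>

lemma depends_body_pred:
  assumes "C \<in> P" "q \<in> gpreds (bd C)" "hpred (hd C) = p \<or> depends P p (hpred (hd C))"
  shows "depends P p q"
proof -
  have "(hpred (hd C), q) \<in> dep1 P" using assms(1,2) by (auto simp: dep1_def)
  then show ?thesis using assms(3) by (auto simp: depends_def)
qed

lemma models_least_model_def_elim:
  assumes "def_elim P p P'"
  shows "models (least_model P' \<union> {B \<in> least_model P. hpred B \<noteq> p \<and> \<not> depends P p (hpred B)}) P"
    (is "models ?I P")
proof -
  have P': "P' = {C\<in>P. depends_cl P p C}" using assms by (simp add: def_elim_def)
  then have I: "?I \<subseteq> least_model P" using least_model_mono[of P' P] by blast
  have "valid ?I C" if C: "C \<in> P" for C
  proof (rule validI)
    fix \<sigma> assume g: "ground_subst \<sigma>" and s: "gsat ?I (subst_goal \<sigma> (bd C))"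
    show "subst_hd \<sigma> (hd C) \<in> ?I"
    proof (cases "hpred (hd C) = p \<or> depends P p (hpred (hd C))")
      case True
      then have "C \<in> P'" using P' C by (simp add: depends_cl_def)
      have "gsat (least_model P') (subst_goal \<sigma> (bd C))"
      proof (rule gsat_mono_rel_atoms[OF s])
        fix q ts assume q: "Rel q ts \<in> set (subst_goal \<sigma> (bd C))"
        then have "(q, ts) \<in> ?I" using s by (auto simp: gsat_def)
        moreover have "(q, length ts) \<in> gpreds (bd C)" using Rel_in_gpreds[OF q] by simp
        then have "depends P p (q, length ts)" using depends_body_pred[OF C] True by simp
        ultimately show "(q, ts) \<in> least_model P'" by (auto simp: hpred_def)
      qed
      then show ?thesis
        using models_least_model[of P'] \<open>C \<in> P'\<close> g by (simp add: models_iff_valid validD)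
    next
      case False
      have "gsat (least_model P) (subst_goal \<sigma> (bd C))"
      proof (rule gsat_mono_rel_atoms[OF s])
        fix q ts assume "Rel q ts \<in> set (subst_goal \<sigma> (bd C))"
        then have "(q, ts) \<in> ?I" using s by (auto simp: gsat_def)
        then show "(q, ts) \<in> least_model P" using I by blast
      qed
      then show ?thesis
        using models_least_model[of P] C g False by (simp add: models_iff_valid validD)
    qed
  qed
  then show ?thesis by (simp add: models_iff_valid)
qed

lemma least_model_def_elim:
  assumes elim: "def_elim P p P'" and A: "hpred A = p"
  shows "A \<in> least_model P' \<longleftrightarrow> A \<in> least_model P"
proof
  have "P' \<subseteq> P" using elim by (auto simp: def_elim_def)
  then show "A \<in> least_model P' \<Longrightarrow> A \<in> least_model P" using least_model_mono by blast
  let ?I = "least_model P' \<union> {B \<in> least_model P. hpred B \<noteq> p \<and> \<not> depends P p (hpred B)}"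
  have "herbrand_interp ?I" using herbrand_interp_least_model by (auto simp: herbrand_interp_def)
  then have "least_model P \<subseteq> ?I" using models_least_model_def_elim[OF elim] by (rule least_model_le)
  then show "A \<in> least_model P \<Longrightarrow> A \<in> least_model P'" using A by auto
qed

section \<open>Transformation sequences without definition elimination\<close>

lemma transf_seq_prefix: "transf_seq Ps lab n \<Longrightarrow> m \<le> n \<Longrightarrow> transf_seq Ps lab m"
  by (simp add: transf_seq_def)

lemma defs_upto_mono: "k \<le> k' \<Longrightarrow> defs_upto lab k \<subseteq> defs_upto lab k'"
  unfolding defs_upto_def using order_less_le_trans by blast

lemma defs_upto_Suc:
  "defs_upto lab (Suc k) = defs_upto lab k \<union> (case lab k of RDef Ds \<Rightarrow> Ds | _ \<Rightarrow> {})"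
  by (auto simp: defs_upto_def less_Suc_eq split: rule_app.splits)

locale unfold_fold_sequence =
  fixes Ps :: "nat \<Rightarrow> program" and lab :: "nat \<Rightarrow> rule_app" and n :: nat
  assumes transf_seq: "transf_seq Ps lab n"
    and no_def_elim: "\<And>k q. k < n \<Longrightarrow> lab k \<noteq> RElim q"
begin

lemma step_def_intro: "k < n \<Longrightarrow> lab k = RDef Ds \<Longrightarrow> def_intro Ps k Ds (Ps (Suc k))"
  and step_unfold: "k < n \<Longrightarrow> lab k = RUnfold C \<Longrightarrow> unfold_step (Ps k) C (Ps (Suc k))"
  and step_fold: "k < n \<Longrightarrow> lab k = RFold q \<Longrightarrow> fold_step (defs_upto lab k) (Ps k) q (Ps (Suc k))"
  and step_subsume: "k < n \<Longrightarrow> lab k = RSubsume \<Longrightarrow> subsume_step (Ps k) (Ps (Suc k))"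
  and step_headgen: "k < n \<Longrightarrow> lab k = RHeadGen \<Longrightarrow> headgen_step (Ps k) (Ps (Suc k))"
  and step_casesplit: "k < n \<Longrightarrow> lab k = RCaseSplit \<Longrightarrow> casesplit_step (Ps k) (Ps (Suc k))"
  and step_eqelim: "k < n \<Longrightarrow> lab k = REqElim \<Longrightarrow> eqelim_step (Ps k) (Ps (Suc k))"
  and step_diseq: "k < n \<Longrightarrow> lab k = RDiseq \<Longrightarrow> diseq_step (Ps k) (Ps (Suc k))"
  using transf_seq by (auto simp: transf_seq_def tstep_def Let_def)

lemma def_intro_Suc: "j < n \<Longrightarrow> lab j = RDef Ds \<Longrightarrow> Ps (Suc j) = Ps j \<union> Ds"
  using step_def_intro by (simp add: def_intro_def)

lemma def_introD:
  assumes "j < n" "lab j = RDef Ds" "D \<in> Ds"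
  shows "\<And>i. i \<le> j \<Longrightarrow> hpred (hd D) \<notin> prog_preds (Ps i)"
    and "gpreds (bd D) \<subseteq> prog_preds (Ps 0)"
    and "\<And>D'. D' \<in> Ds \<Longrightarrow> hd D' = hd D"
proof -
  obtain newp Xs where "\<forall>D\<in>Ds. hd D = (newp, map Var Xs)"
    and "\<forall>i\<le>j. (newp, length Xs) \<notin> prog_preds (Ps i)"
    and "\<forall>D\<in>Ds. gpreds (bd D) \<subseteq> prog_preds (Ps 0)"
    using step_def_intro[OF assms(1,2)] unfolding def_intro_def by blast
  then show "\<And>i. i \<le> j \<Longrightarrow> hpred (hd D) \<notin> prog_preds (Ps i)"
    "gpreds (bd D) \<subseteq> prog_preds (Ps 0)" "\<And>D'. D' \<in> Ds \<Longrightarrow> hd D' = hd D"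
    using assms(3) by (auto simp: hpred_def)
qed

lemma def_intro_step_unique:
  assumes "j1 < n" "lab j1 = RDef Ds1" "D1 \<in> Ds1" "j2 < n" "lab j2 = RDef Ds2" "D2 \<in> Ds2"
    and "hpred (hd D1) = hpred (hd D2)"
  shows "j1 = j2"
proof (rule ccontr)
  have new: "hpred (hd D) \<in> prog_preds (Ps (Suc j))"
    if "j < n" "lab j = RDef Ds" "D \<in> Ds" for j Ds D
    using def_intro_Suc[OF that(1,2)] that(3) by (auto intro: hpred_in_prog_preds)
  assume "j1 \<noteq> j2"
  then consider "j1 < j2" | "j2 < j1" by linarith
  then show False
    using new[OF assms(1-3)] new[OF assms(4-6)] def_introD(1)[OF assms(1-3)] def_introD(1)[OF assms(4-6)]
      assms(7) by (metis Suc_leI)+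
qed

definition old_preds :: "pred set" where
  "old_preds = prog_preds (Ps 0)"

definition new_preds :: "nat \<Rightarrow> pred set" where
  "new_preds k = (\<lambda>D. hpred (hd D)) ` defs_upto lab k"

definition folded_preds :: "nat \<Rightarrow> pred set" where
  "folded_preds k = {q. \<exists>j<k. lab j = RFold q}"

lemma in_defs_upto_iff: "D \<in> defs_upto lab k \<longleftrightarrow> (\<exists>j<k. \<exists>Ds. lab j = RDef Ds \<and> D \<in> Ds)"
  by (auto simp: defs_upto_def)

lemma def_pred_not_old: "D \<in> defs_upto lab n \<Longrightarrow> hpred (hd D) \<notin> old_preds"
proof -
  assume "D \<in> defs_upto lab n"
  then obtain j Ds where "j < n" "lab j = RDef Ds" "D \<in> Ds" unfolding in_defs_upto_iff by blast
  from def_introD(1)[OF this, of 0] show ?thesis by (simp add: old_preds_def)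
qed

lemma def_not_in_P0: "D \<in> defs_upto lab n \<Longrightarrow> D \<notin> Ps 0"
  using def_pred_not_old hpred_in_prog_preds by (auto simp: old_preds_def)

lemma def_body_preds_old: "D \<in> defs_upto lab n \<Longrightarrow> gpreds (bd D) \<subseteq> old_preds"
proof -
  assume "D \<in> defs_upto lab n"
  then obtain j Ds where "j < n" "lab j = RDef Ds" "D \<in> Ds" unfolding in_defs_upto_iff by blast
  from def_introD(2)[OF this] show ?thesis by (simp add: old_preds_def)
qed

lemma defs_same_hd:
  assumes "D1 \<in> defs_upto lab n" "D2 \<in> defs_upto lab n" "hpred (hd D1) = hpred (hd D2)"
  shows "hd D1 = hd D2"
proof -
  from assms(1) obtain j1 Ds1 where 1: "j1 < n" "lab j1 = RDef Ds1" "D1 \<in> Ds1"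
    unfolding in_defs_upto_iff by blast
  from assms(2) obtain j2 Ds2 where 2: "j2 < n" "lab j2 = RDef Ds2" "D2 \<in> Ds2"
    unfolding in_defs_upto_iff by blast
  have "j1 = j2" by (rule def_intro_step_unique[OF 1 2 assms(3)])
  then have "D2 \<in> Ds1" using 1(2) 2(2,3) by auto
  then have "hd D2 = hd D1" by (rule def_introD(3)[OF 1])
  then show ?thesis by (rule sym)
qed

lemma def_in_defs_upto:
  assumes "k \<le> n" "D \<in> defs_upto lab n" "hpred (hd D) \<in> new_preds k"
  shows "D \<in> defs_upto lab k"
proof -
  obtain D' where D': "D' \<in> defs_upto lab k" "hpred (hd D') = hpred (hd D)"
    using assms(3) by (auto simp: new_preds_def)
  obtain j1 Ds1 where 1: "j1 < n" "lab j1 = RDef Ds1" "D \<in> Ds1"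
    using assms(2) unfolding in_defs_upto_iff by blast
  obtain j2 Ds2 where 2: "j2 < k" "lab j2 = RDef Ds2" "D' \<in> Ds2"
    using D'(1) unfolding in_defs_upto_iff by blast
  have "j1 = j2" using def_intro_step_unique[OF 1, of j2 Ds2 D'] 2 assms(1) D'(2) by simp
  then show ?thesis using 1 2 unfolding in_defs_upto_iff by blast
qed

lemma new_preds_mono: "k \<le> k' \<Longrightarrow> new_preds k \<subseteq> new_preds k'"
  unfolding new_preds_def using defs_upto_mono by (meson image_mono)

lemma new_preds_Suc: "(\<And>Ds. lab k \<noteq> RDef Ds) \<Longrightarrow> new_preds (Suc k) = new_preds k"
  unfolding new_preds_def by (simp add: defs_upto_Suc split: rule_app.splits)

lemma new_pred_not_old: "k \<le> n \<Longrightarrow> q \<in> new_preds k \<Longrightarrow> q \<notin> old_preds"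
proof -
  assume "k \<le> n" "q \<in> new_preds k"
  then obtain D where "D \<in> defs_upto lab n" "q = hpred (hd D)"
    using defs_upto_mono unfolding new_preds_def by blast
  then show ?thesis using def_pred_not_old by simp
qed

lemma fold_pred_new: "k < n \<Longrightarrow> lab k = RFold q \<Longrightarrow> q \<in> new_preds k"
proof -
  assume "k < n" "lab k = RFold q"
  then have "{D \<in> defs_upto lab k. hpred (hd D) = q} \<noteq> {}"
    using step_fold unfolding fold_step_def Let_def by blast
  then show ?thesis unfolding new_preds_def by blast
qed

lemma folded_preds_new: "k \<le> n \<Longrightarrow> folded_preds k \<subseteq> new_preds k"
proof
  fix q assume "k \<le> n" "q \<in> folded_preds k"
  then obtain j where "j < k" "lab j = RFold q" by (auto simp: folded_preds_def)
  then show "q \<in> new_preds k"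
    using fold_pred_new new_preds_mono \<open>k \<le> n\<close> by (meson less_imp_le_nat order_less_le_trans subsetD)
qed

definition M0 :: "hatom set" where
  "M0 = least_model (Ps 0 \<union> defs_upto lab n)"

text \<open>Definition clauses cost nothing, so an atom of a new predicate weighs no more than the
  body of a defining clause; this is what makes folding weight-preserving.\<close>
definition cost :: "clause \<Rightarrow> nat" where
  "cost C = (if C \<in> Ps 0 then 1 else 0)"

definition weight :: "hatom \<Rightarrow> nat" where
  "weight A = (LEAST k. derives (Ps 0 \<union> defs_upto lab n) cost A k)"

lemma M0_iff_derives: "A \<in> M0 \<longleftrightarrow> (\<exists>k. derives (Ps 0 \<union> defs_upto lab n) cost A k)"
  using least_model_eq_derivable by (auto simp: M0_def)

lemma derives_weight: "A \<in> M0 \<Longrightarrow> derives (Ps 0 \<union> defs_upto lab n) cost A (weight A)"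
  unfolding weight_def M0_iff_derives by (rule LeastI_ex)

lemma weight_le: "derives (Ps 0 \<union> defs_upto lab n) cost A k \<Longrightarrow> weight A \<le> k"
  unfolding weight_def by (rule Least_le)

lemma M0_min_instance:
  assumes "A \<in> M0"
  obtains C \<sigma> where "C \<in> Ps 0 \<union> defs_upto lab n" "ground_subst \<sigma>" "subst_hd \<sigma> (hd C) = A"
    "gsat M0 (subst_goal \<sigma> (bd C))" "cost C + goal_weight weight (subst_goal \<sigma> (bd C)) \<le> weight A"
proof -
  from derives_weight[OF assms] obtain C \<sigma> ns where C: "C \<in> Ps 0 \<union> defs_upto lab n" "ground_subst \<sigma>"
    "subst_hd \<sigma> (hd C) = A" and b: "gsat {} (filter (Not \<circ> is_nonbasic) (subst_goal \<sigma> (bd C)))"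
    and ds: "list_all2 (derives (Ps 0 \<union> defs_upto lab n) cost) (rel_atoms (subst_goal \<sigma> (bd C))) ns"
    and w: "weight A = cost C + sum_list ns"
    by (cases rule: derives.cases) auto
  from ds have "goal_weight weight (subst_goal \<sigma> (bd C)) \<le> sum_list ns"
    unfolding goal_weight_def by (induction rule: list_all2_induct) (auto intro: add_mono weight_le)
  moreover have "gsat M0 (subst_goal \<sigma> (bd C))"
    using b ds list_all2_ex_right M0_iff_derives by (fastforce simp: gsat_iff[of M0])
  ultimately show thesis using that C w by simp
qed

lemma M0_instance_weight:
  assumes "C \<in> Ps 0 \<union> defs_upto lab n" "ground_subst \<sigma>" "gsat M0 (subst_goal \<sigma> (bd C))"
  shows "subst_hd \<sigma> (hd C) \<in> M0"
    and "weight (subst_hd \<sigma> (hd C)) \<le> cost C + goal_weight weight (subst_goal \<sigma> (bd C))"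
proof -
  have b: "gsat {} (filter (Not \<circ> is_nonbasic) (subst_goal \<sigma> (bd C)))"
    and "set (rel_atoms (subst_goal \<sigma> (bd C))) \<subseteq> M0"
    using assms(3) by (auto simp: gsat_iff[of M0])
  then have "list_all2 (derives (Ps 0 \<union> defs_upto lab n) cost) (rel_atoms (subst_goal \<sigma> (bd C)))
      (map weight (rel_atoms (subst_goal \<sigma> (bd C))))"
    using derives_weight by (auto simp: list_all2_map2 list_all2_same)
  then have "derives (Ps 0 \<union> defs_upto lab n) cost (subst_hd \<sigma> (hd C))
      (cost C + goal_weight weight (subst_goal \<sigma> (bd C)))"
    using derives.intros[OF assms(1,2) b] by (simp add: goal_weight_def)
  then show "subst_hd \<sigma> (hd C) \<in> M0"
    and "weight (subst_hd \<sigma> (hd C)) \<le> cost C + goal_weight weight (subst_goal \<sigma> (bd C))"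
    using M0_iff_derives weight_le by blast+
qed

lemma M0_preds: "A \<in> M0 \<Longrightarrow> hpred A \<in> old_preds \<union> new_preds n"
  by (erule M0_min_instance) (auto simp: old_preds_def new_preds_def dest: hpred_in_prog_preds)

lemma new_pred_def_instance:
  assumes "k \<le> n" "A \<in> M0" "hpred A \<in> new_preds k"
  shows "bounded_instance M0 weight (defs_upto lab k) A 0 (weight A)"
proof -
  obtain C \<sigma> where C: "C \<in> Ps 0 \<union> defs_upto lab n" "ground_subst \<sigma>" "subst_hd \<sigma> (hd C) = A"
    "gsat M0 (subst_goal \<sigma> (bd C))" "cost C + goal_weight weight (subst_goal \<sigma> (bd C)) \<le> weight A"
    using M0_min_instance[OF assms(2)] by blast
  have hp: "hpred (hd C) = hpred A" using C(3) hpred_subst_hd[of \<sigma> "hd C"] by simp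
  have "C \<notin> Ps 0"
  proof
    assume "C \<in> Ps 0"
    then have "hpred A \<in> old_preds" using hpred_in_prog_preds hp by (fastforce simp: old_preds_def)
    then show False using new_pred_not_old assms(1,3) by blast
  qed
  then have "C \<in> defs_upto lab n" using C(1) by blast
  then have "C \<in> defs_upto lab k" using def_in_defs_upto assms(1,3) hp by simp
  then show ?thesis using C by (intro bounded_instanceI[of C _ \<sigma>]) auto
qed

subsection \<open>Partial correctness\<close>

lemma fold_models_M0:
  assumes k: "k < n" "lab k = RFold q" and m: "models M0 (Ps k)"
  shows "models M0 (Ps (Suc k))"
proof (rule fold_step_models[OF step_fold[OF k] m])
  fix N assume N: "N \<in> M0" "hpred N = q"
  then have "bounded_instance M0 weight (defs_upto lab k) N 0 (weight N)"
    using new_pred_def_instance fold_pred_new[OF k] k(1) by simp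
  then obtain D \<tau> where "D \<in> defs_upto lab k" "ground_subst \<tau>" "subst_hd \<tau> (hd D) = N"
    "gsat M0 (subst_goal \<tau> (bd D))"
    unfolding bounded_instance_def by blast
  moreover from this(3) have "hpred (hd D) = q" using N(2) hpred_subst_hd[of \<tau> "hd D"] by simp
  ultimately show "\<exists>D\<in>defs_upto lab k. hpred (hd D) = q \<and>
      (\<exists>\<tau>. ground_subst \<tau> \<and> subst_hd \<tau> (hd D) = N \<and> gsat M0 (subst_goal \<tau> (bd D)))"
    by blast
next
  fix D1 D2 assume D: "D1 \<in> defs_upto lab k" "D2 \<in> defs_upto lab k"
    "hpred (hd D1) = q" "hpred (hd D2) = q"
  then have "D1 \<in> defs_upto lab n" "D2 \<in> defs_upto lab n"
    using defs_upto_mono[of k n] k by auto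
  then show "hd D1 = hd D2" using D(3,4) by (intro defs_same_hd) simp_all
qed

lemma models_M0_Suc:
  assumes k: "k < n" and m: "models M0 (Ps k)"
  shows "models M0 (Ps (Suc k))"
proof (cases "lab k")
  case (RDef Ds)
  have "Ds \<subseteq> Ps 0 \<union> defs_upto lab n" using RDef k by (auto simp: defs_upto_def)
  moreover have "models M0 (Ps 0 \<union> defs_upto lab n)" unfolding M0_def by (rule models_least_model)
  ultimately have "models M0 Ds" by (rule models_subset[rotated])
  then show ?thesis using m def_intro_Suc[OF k RDef] by (auto simp: models_def)
next
  case (RElim q)
  then show ?thesis using no_def_elim k by blast
next
  case (RUnfold C)
  show ?thesis using m step_unfold[OF k RUnfold] by (rule unfold_step_models)
next
  case (RFold q)
  then show ?thesis using fold_models_M0 k m by blast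
next
  case RSubsume
  show ?thesis using m step_subsume[OF k RSubsume] by (rule subsume_step_models)
next
  case RHeadGen
  show ?thesis using m step_headgen[OF k RHeadGen] by (rule headgen_step_models)
next
  case RCaseSplit
  show ?thesis using m step_casesplit[OF k RCaseSplit] by (rule casesplit_step_models)
next
  case REqElim
  show ?thesis using m step_eqelim[OF k REqElim] by (rule eqelim_step_models)
next
  case RDiseq
  show ?thesis using m step_diseq[OF k RDiseq] by (rule diseq_step_models)
qed

lemma models_M0: "k \<le> n \<Longrightarrow> models M0 (Ps k)"
proof (induction k)
  case 0
  have "models M0 (Ps 0 \<union> defs_upto lab n)" unfolding M0_def by (rule models_least_model)
  then show ?case by (rule models_subset) simp
next
  case (Suc k)
  then show ?case using models_M0_Suc by simp
qed

lemma body_preds_Suc: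
  assumes k: "k < n" and b: "body_preds (Ps k) \<subseteq> old_preds \<union> folded_preds k"
  shows "body_preds (Ps (Suc k)) \<subseteq> old_preds \<union> folded_preds (Suc k)"
proof -
  have b': "body_preds (Ps k) \<subseteq> old_preds \<union> folded_preds (Suc k)"
    using b by (auto simp: folded_preds_def less_Suc_eq)
  show ?thesis
  proof (cases "lab k")
    case (RDef Ds)
    have "body_preds Ds \<subseteq> old_preds"
      using def_introD(2)[OF k RDef] by (auto simp: body_preds_def old_preds_def)
    then show ?thesis using b' def_intro_Suc[OF k RDef] by (auto simp: body_preds_def)
  next
    case (RElim q)
    then show ?thesis using no_def_elim k by blast
  next
    case (RUnfold C)
    then show ?thesis using unfold_step_body_preds[OF step_unfold[OF k RUnfold]] b' by blast
  next
    case (RFold q)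
    then have "q \<in> folded_preds (Suc k)" by (auto simp: folded_preds_def)
    then show ?thesis using fold_step_body_preds[OF step_fold[OF k RFold]] b' by blast
  next
    case RSubsume
    show ?thesis using subsume_step_body_preds[OF step_subsume[OF k RSubsume]] b' by blast
  next
    case RHeadGen
    show ?thesis using headgen_step_body_preds[OF step_headgen[OF k RHeadGen]] b' by blast
  next
    case RCaseSplit
    show ?thesis using casesplit_step_body_preds[OF step_casesplit[OF k RCaseSplit]] b' by blast
  next
    case REqElim
    show ?thesis using eqelim_step_body_preds[OF step_eqelim[OF k REqElim]] b' by blast
  next
    case RDiseq
    show ?thesis using diseq_step_body_preds[OF step_diseq[OF k RDiseq]] b' by blast
  qed
qed

lemma body_preds_old_or_folded: "k \<le> n \<Longrightarrow> body_preds (Ps k) \<subseteq> old_preds \<union> folded_preds k"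
proof (induction k)
  case 0
  show ?case by (auto simp: body_preds_def old_preds_def prog_preds_def)
next
  case (Suc k)
  then show ?case using body_preds_Suc by simp
qed

subsection \<open>Weight-consistent witnesses\<close>

definition unfolded_def_instance :: "nat \<Rightarrow> hatom \<Rightarrow> bool" where
  "unfolded_def_instance k A \<longleftrightarrow>
     (\<exists>D\<in>defs_upto lab n. (\<exists>j<k. lab j = RUnfold D) \<and> bounded_instance M0 weight {D} A 0 (weight A))"

text \<open>A credited atom has a witness strictly lighter than itself: an atom of an old predicate
  is derived with a clause of P0, which costs one, at the root; unfolding a definition
  replaces one of its body atoms, all of old predicates, by a strictly lighter body.\<close>
definition credit :: "nat \<Rightarrow> hatom \<Rightarrow> nat" where
  "credit k A = (if hpred A \<in> old_preds \<or> unfolded_def_instance k A then 1 else 0)"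

definition witnessed :: "nat \<Rightarrow> bool" where
  "witnessed k \<longleftrightarrow> (\<forall>A\<in>M0. hpred A \<in> old_preds \<union> new_preds k \<longrightarrow>
     bounded_instance M0 weight (Ps k) A (credit k A) (weight A))"

lemma credit_le_1: "credit k A \<le> 1"
  by (simp add: credit_def)

lemma credit_old: "hpred A \<in> old_preds \<Longrightarrow> credit k A = 1"
  by (simp add: credit_def)

lemma unfolded_def_instance_Suc:
  "unfolded_def_instance (Suc k) A \<longleftrightarrow> unfolded_def_instance k A \<or>
     (\<exists>D\<in>defs_upto lab n. lab k = RUnfold D \<and> bounded_instance M0 weight {D} A 0 (weight A))"
  by (auto simp: unfolded_def_instance_def less_Suc_eq)

lemma credit_mono: "credit k A \<le> credit (Suc k) A"
  by (auto simp: credit_def unfolded_def_instance_Suc)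

lemma credit_Suc: "(\<And>D. lab k \<noteq> RUnfold D) \<Longrightarrow> credit (Suc k) A = credit k A"
  by (auto simp: credit_def unfolded_def_instance_Suc)

lemma witnessed_0: "witnessed 0"
  unfolding witnessed_def
proof (intro ballI impI)
  fix A assume A: "A \<in> M0" "hpred A \<in> old_preds \<union> new_preds 0"
  then have old: "hpred A \<in> old_preds" by (simp add: new_preds_def defs_upto_def)
  obtain C \<sigma> where C: "C \<in> Ps 0 \<union> defs_upto lab n" "ground_subst \<sigma>" "subst_hd \<sigma> (hd C) = A"
    "gsat M0 (subst_goal \<sigma> (bd C))" "cost C + goal_weight weight (subst_goal \<sigma> (bd C)) \<le> weight A"
    using M0_min_instance[OF A(1)] by blast
  have "C \<notin> defs_upto lab n"
    using def_pred_not_old old C(3) hpred_subst_hd[of \<sigma> "hd C"] by auto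
  then have "C \<in> Ps 0" "cost C = 1" using C(1) by (auto simp: cost_def)
  then show "bounded_instance M0 weight (Ps 0) A (credit 0 A) (weight A)"
    using C credit_old[OF old] by (intro bounded_instanceI[of C _ \<sigma>]) auto
qed

lemma witnessed_Suc_covered:
  assumes "witnessed k" "\<And>Ds. lab k \<noteq> RDef Ds" "\<And>D. lab k \<noteq> RUnfold D"
    and "covered_by M0 weight (Ps k) (Ps (Suc k))"
  shows "witnessed (Suc k)"
  unfolding witnessed_def new_preds_Suc[OF assms(2)] credit_Suc[OF assms(3)]
proof (intro ballI impI)
  fix A assume "A \<in> M0" "hpred A \<in> old_preds \<union> new_preds k"
  then have "bounded_instance M0 weight (Ps k) A (credit k A) (weight A)"
    using assms(1) unfolding witnessed_def by blast
  then show "bounded_instance M0 weight (Ps (Suc k)) A (credit k A) (weight A)"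
    using assms(4) by (rule bounded_instance_covered_by)
qed

text \<open>The witness is the definition clause at the root of a lightest derivation.\<close>
lemma def_intro_new_pred:
  assumes k: "k < n" and RDef: "lab k = RDef Ds" and D0: "D0 \<in> Ds" "hpred (hd D0) = hpred A"
    and A: "A \<in> M0"
  shows "credit (Suc k) A = 0" and "bounded_instance M0 weight (Ps (Suc k)) A 0 (weight A)"
proof -
  have new: "hpred A \<notin> prog_preds (Ps i)" if "i \<le> k" for i
    using def_introD(1)[OF k RDef D0(1) that] D0(2) by simp
  have "\<not> unfolded_def_instance (Suc k) A"
  proof
    assume "unfolded_def_instance (Suc k) A"
    then obtain D j where "j < Suc k" "lab j = RUnfold D" "hpred (hd D) = hpred A"
      unfolding unfolded_def_instance_def bounded_instance_def by auto
    moreover from this have "j < k" using RDef less_Suc_eq by auto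
    ultimately have "D \<in> Ps j" "hpred (hd D) = hpred A"
      using step_unfold k by (auto simp: unfold_step_def)
    then show False using new[of j] \<open>j < k\<close> hpred_in_prog_preds by fastforce
  qed
  moreover have "hpred A \<notin> old_preds" using new[of 0] by (simp add: old_preds_def)
  ultimately show "credit (Suc k) A = 0" by (simp add: credit_def)
  obtain C \<sigma> where C: "C \<in> Ps 0 \<union> defs_upto lab n" "ground_subst \<sigma>" "subst_hd \<sigma> (hd C) = A"
    "gsat M0 (subst_goal \<sigma> (bd C))" "cost C + goal_weight weight (subst_goal \<sigma> (bd C)) \<le> weight A"
    using M0_min_instance[OF A] by blast
  have hC: "hpred (hd C) = hpred A" using C(3) hpred_subst_hd[of \<sigma> "hd C"] by simp
  then have "C \<notin> Ps 0" using new[of 0] hpred_in_prog_preds by fastforce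
  then have "C \<in> defs_upto lab n" using C(1) by blast
  then obtain j Ds' where "j < n" "lab j = RDef Ds'" "C \<in> Ds'"
    unfolding in_defs_upto_iff by blast
  moreover from this have "j = k" using def_intro_step_unique[OF _ _ _ k RDef D0(1)] hC D0(2) by simp
  ultimately have "C \<in> Ps (Suc k)" using RDef def_intro_Suc[OF k RDef] by simp
  then show "bounded_instance M0 weight (Ps (Suc k)) A 0 (weight A)"
    using C by (intro bounded_instanceI[of C _ \<sigma>]) auto
qed

lemma witnessed_Suc_def_intro:
  assumes k: "k < n" and RDef: "lab k = RDef Ds" and wk: "witnessed k"
  shows "witnessed (Suc k)"
  unfolding witnessed_def
proof (intro ballI impI)
  fix A assume A: "A \<in> M0" "hpred A \<in> old_preds \<union> new_preds (Suc k)"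
  show "bounded_instance M0 weight (Ps (Suc k)) A (credit (Suc k) A) (weight A)"
  proof (cases "hpred A \<in> old_preds \<union> new_preds k")
    case True
    then have "bounded_instance M0 weight (Ps k) A (credit k A) (weight A)"
      using wk A(1) unfolding witnessed_def by blast
    then show ?thesis
      using bounded_instance_covered_by covered_by_subset def_intro_Suc[OF k RDef] credit_Suc RDef
      by simp
  next
    case False
    then obtain D0 where "D0 \<in> Ds" "hpred (hd D0) = hpred A"
      using A(2) RDef by (auto simp: new_preds_def defs_upto_Suc)
    then show ?thesis using def_intro_new_pred[OF k RDef _ _ A(1)] by simp
  qed
qed

lemma body_atom_witnessed:
  assumes "k \<le> n" "witnessed k" "C \<in> Ps k" "gsat M0 (subst_goal \<sigma> (bd C))" "Rel p ts \<in> set (bd C)"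
  shows "bounded_instance M0 weight (Ps k) (p, map (subst_tm \<sigma>) ts)
           (credit k (p, map (subst_tm \<sigma>) ts)) (weight (p, map (subst_tm \<sigma>) ts))"
proof -
  have "(p, length ts) \<in> body_preds (Ps k)"
    using Rel_in_gpreds[OF assms(5)] gpreds_subset_body_preds[OF assms(3)] by blast
  then have "hpred (p, map (subst_tm \<sigma>) ts) \<in> old_preds \<union> new_preds k"
    using body_preds_old_or_folded[OF assms(1)] folded_preds_new[OF assms(1)] by (auto simp: hpred_def)
  moreover have "Rel p (map (subst_tm \<sigma>) ts) \<in> set (subst_goal \<sigma> (bd C))"
    using assms(5) by (force simp: subst_goal_def)
  then have "(p, map (subst_tm \<sigma>) ts) \<in> M0" using assms(4) by (auto simp: gsat_def)
  ultimately show ?thesis using assms(2) unfolding witnessed_def by blast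
qed

lemma unfold_witness:
  assumes k: "k < n" "lab k = RUnfold C0" and wk: "witnessed k"
    and g: "ground_subst \<sigma>" and s: "gsat M0 (subst_goal \<sigma> (bd C0))"
    and d: "\<And>p ts. Rel p ts \<in> set (bd C0) \<Longrightarrow> d \<le> credit k (p, map (subst_tm \<sigma>) ts)"
  shows "bounded_instance M0 weight (Ps (Suc k)) (subst_hd \<sigma> (hd C0)) d
           (goal_weight weight (subst_goal \<sigma> (bd C0)))"
proof (rule unfold_step_bounded_instance[OF step_unfold[OF k] g s])
  have "C0 \<in> Ps k" using step_unfold[OF k] by (simp add: unfold_step_def)
  fix p ts assume r: "Rel p ts \<in> set (bd C0)"
  have "bounded_instance M0 weight (Ps k) (p, map (subst_tm \<sigma>) ts)
      (credit k (p, map (subst_tm \<sigma>) ts)) (weight (p, map (subst_tm \<sigma>) ts))"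
    using body_atom_witnessed[OF _ wk \<open>C0 \<in> Ps k\<close> s r] k(1) by simp
  then show "bounded_instance M0 weight (Ps k) (p, map (subst_tm \<sigma>) ts) d (weight (p, map (subst_tm \<sigma>) ts))"
    using d[OF r] by (rule bounded_instance_mono) simp
qed

text \<open>The body atoms of a definition are all of old predicates, hence credited, so unfolding
  it yields a witness one lighter than the definition instance.\<close>
lemma unfold_def_witness:
  assumes k: "k < n" "lab k = RUnfold C0" and wk: "witnessed k" and C0: "C0 \<in> defs_upto lab n"
    and A: "bounded_instance M0 weight {C0} A 0 (weight A)"
  shows "bounded_instance M0 weight (Ps (Suc k)) A 1 (weight A)"
proof -
  obtain \<sigma> where \<sigma>: "ground_subst \<sigma>" "subst_hd \<sigma> (hd C0) = A"
    "gsat M0 (subst_goal \<sigma> (bd C0))" "goal_weight weight (subst_goal \<sigma> (bd C0)) \<le> weight A"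
    using A unfolding bounded_instance_def by auto
  have "1 \<le> credit k (p, map (subst_tm \<sigma>) ts)" if "Rel p ts \<in> set (bd C0)" for p ts
    using def_body_preds_old[OF C0] Rel_in_gpreds[OF that] credit_old by (auto simp: hpred_def)
  then have "bounded_instance M0 weight (Ps (Suc k)) A 1 (goal_weight weight (subst_goal \<sigma> (bd C0)))"
    using unfold_witness[OF k wk \<sigma>(1,3), of 1] \<sigma>(2) by simp
  then show ?thesis by (rule bounded_instance_mono) (simp_all add: \<sigma>(4))
qed

lemma witnessed_Suc_unfold:
  assumes k: "k < n" "lab k = RUnfold C0" and wk: "witnessed k"
  shows "witnessed (Suc k)"
proof -
  have u: "unfold_step (Ps k) C0 (Ps (Suc k))" using step_unfold[OF k] .
  have new: "new_preds (Suc k) = new_preds k" using k(2) by (simp add: new_preds_Suc)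
  show ?thesis unfolding witnessed_def new
  proof (intro ballI impI)
    fix A assume A: "A \<in> M0" "hpred A \<in> old_preds \<union> new_preds k"
    show "bounded_instance M0 weight (Ps (Suc k)) A (credit (Suc k) A) (weight A)"
    proof (cases "credit (Suc k) A = credit k A")
      case True
      obtain C \<sigma> where C: "C \<in> Ps k" "ground_subst \<sigma>" "subst_hd \<sigma> (hd C) = A"
        "gsat M0 (subst_goal \<sigma> (bd C))" "goal_weight weight (subst_goal \<sigma> (bd C)) + credit k A \<le> weight A"
        using wk A unfolding witnessed_def bounded_instance_def by blast
      show ?thesis
      proof (cases "C = C0")
        case False
        then have "C \<in> Ps (Suc k)" using u C(1) by (auto simp: unfold_step_def)
        then show ?thesis using C True by (intro bounded_instanceI[of C _ \<sigma>]) auto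
      next
        case Ceq: True
        have "bounded_instance M0 weight (Ps (Suc k)) A 0 (goal_weight weight (subst_goal \<sigma> (bd C)))"
          using unfold_witness[OF k wk C(2), of 0] C(3,4) Ceq by simp
        then show ?thesis using C(5) True unfolding bounded_instance_def by fastforce
      qed
    next
      case False
      then have "credit k A = 0" "credit (Suc k) A = 1"
        using credit_mono[of k A] credit_le_1[of "Suc k" A] by auto
      then have "unfolded_def_instance (Suc k) A" "\<not> unfolded_def_instance k A"
        by (auto simp: credit_def split: if_splits)
      then have "C0 \<in> defs_upto lab n" "bounded_instance M0 weight {C0} A 0 (weight A)"
        using k(2) unfolding unfolded_def_instance_Suc by auto
      then show ?thesis using unfold_def_witness[OF k wk] \<open>credit (Suc k) A = 1\<close> by simp
    qed
  qed
qed

lemma fold_covered_by: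
  assumes k: "k < n" "lab k = RFold q"
  shows "covered_by M0 weight (Ps k) (Ps (Suc k))"
proof (rule fold_step_covered_by[OF step_fold[OF k]])
  fix D \<tau> assume D: "D \<in> defs_upto lab k" and g: "ground_subst \<tau>" and s: "gsat M0 (subst_goal \<tau> (bd D))"
  then have "D \<in> defs_upto lab n" using defs_upto_mono[of k n] k(1) by auto
  then have "D \<in> Ps 0 \<union> defs_upto lab n" "cost D = 0" using def_not_in_P0 by (auto simp: cost_def)
  then show "subst_hd \<tau> (hd D) \<in> M0 \<and> weight (subst_hd \<tau> (hd D)) \<le> goal_weight weight (subst_goal \<tau> (bd D))"
    using M0_instance_weight[of D \<tau>] g s by simp
qed

lemma witnessed_Suc:
  assumes k: "k < n" and wk: "witnessed k"
  shows "witnessed (Suc k)"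
proof (cases "lab k")
  case (RDef Ds)
  then show ?thesis using witnessed_Suc_def_intro k wk by blast
next
  case (RElim q)
  then show ?thesis using no_def_elim k by blast
next
  case (RUnfold C)
  then show ?thesis using witnessed_Suc_unfold k wk by blast
next
  case (RFold q)
  then show ?thesis using witnessed_Suc_covered[OF wk] fold_covered_by[OF k] by simp
next
  case RSubsume
  then show ?thesis
    using witnessed_Suc_covered[OF wk] subsume_step_covered_by step_subsume[OF k] by simp
next
  case RHeadGen
  then show ?thesis
    using witnessed_Suc_covered[OF wk] headgen_step_covered_by step_headgen[OF k] by simp
next
  case RCaseSplit
  then show ?thesis
    using witnessed_Suc_covered[OF wk] casesplit_step_covered_by step_casesplit[OF k] by simp
next
  case REqElim
  then show ?thesis
    using witnessed_Suc_covered[OF wk] eqelim_step_covered_by step_eqelim[OF k] by simp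
next
  case RDiseq
  then show ?thesis
    using witnessed_Suc_covered[OF wk] diseq_step_covered_by step_diseq[OF k] by simp
qed

lemma witnessed_upto: "k \<le> n \<Longrightarrow> witnessed k"
  by (induction k) (simp_all add: witnessed_0 witnessed_Suc)

subsection \<open>Total correctness\<close>

context
  assumes fold_unfolded: "\<And>k q D. k < n \<Longrightarrow> lab k = RFold q \<Longrightarrow> D \<in> defs_upto lab k \<Longrightarrow>
    hpred (hd D) = q \<Longrightarrow> \<exists>j<n. lab j = RUnfold D"
begin

lemma folded_pred_credit:
  assumes B: "B \<in> M0" "hpred B \<in> folded_preds n"
  shows "credit n B = 1"
proof -
  obtain j where j: "j < n" "lab j = RFold (hpred B)" using B(2) by (auto simp: folded_preds_def)
  then have "bounded_instance M0 weight (defs_upto lab j) B 0 (weight B)"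
    using new_pred_def_instance fold_pred_new B(1) by simp
  then obtain D where D: "D \<in> defs_upto lab j" and inst: "bounded_instance M0 weight {D} B 0 (weight B)"
    unfolding bounded_instance_def by blast
  from inst have "hpred (hd D) = hpred B"
    unfolding bounded_instance_def using hpred_subst_hd by force
  then obtain j' where "j' < n" "lab j' = RUnfold D" using fold_unfolded[OF j D] by blast
  moreover have "D \<in> defs_upto lab n" using D defs_upto_mono[of j n] j(1) by auto
  ultimately have "unfolded_def_instance n B" using inst unfolded_def_instance_def by blast
  then show ?thesis by (simp add: credit_def)
qed

text \<open>The measure 2 weight(B) + 1 - credit(B) decreases from the head of a witness to each of
  its body atoms: either the witness is strictly lighter than its head, or its body atoms,
  whose predicates are old or folded, carry credit themselves.\<close>
lemma M0_subset_least_model: "M0 \<subseteq> least_model (Ps n)"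
proof (rule subset_least_model_wf[where \<mu> = "\<lambda>B. 2 * weight B + (1 - credit n B)"])
  fix A assume A: "A \<in> M0"
  then obtain C \<sigma> where C: "C \<in> Ps n" "ground_subst \<sigma>" "subst_hd \<sigma> (hd C) = A"
    "gsat M0 (subst_goal \<sigma> (bd C))" "goal_weight weight (subst_goal \<sigma> (bd C)) + credit n A \<le> weight A"
    using witnessed_upto[of n] M0_preds unfolding witnessed_def bounded_instance_def by blast
  have "2 * weight (p, ts) + (1 - credit n (p, ts)) < 2 * weight A + (1 - credit n A)"
    if r: "Rel p ts \<in> set (subst_goal \<sigma> (bd C))" for p ts
  proof -
    have w: "weight (p, ts) + credit n A \<le> weight A"
      using weight_le_goal_weight[OF r, of weight] C(5) by simp
    have "(p, length ts) \<in> gpreds (bd C)" using Rel_in_gpreds[OF r] by simp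
    then have "hpred (p, ts) \<in> old_preds \<union> folded_preds n"
      using gpreds_subset_body_preds[OF C(1)] body_preds_old_or_folded[of n] by (auto simp: hpred_def)
    moreover have "(p, ts) \<in> M0" using C(4) r by (auto simp: gsat_def)
    ultimately have "credit n A = 0 \<Longrightarrow> credit n (p, ts) = 1"
      using credit_old folded_pred_credit by blast
    then show ?thesis using w credit_le_1[of n A] credit_le_1[of n "(p, ts)"] by linarith
  qed
  then show "\<exists>C\<in>Ps n. \<exists>\<sigma>. ground_subst \<sigma> \<and> subst_hd \<sigma> (hd C) = A \<and> gsat M0 (subst_goal \<sigma> (bd C)) \<and>
      (\<forall>p ts. Rel p ts \<in> set (subst_goal \<sigma> (bd C)) \<longrightarrow>
         2 * weight (p, ts) + (1 - credit n (p, ts)) < 2 * weight A + (1 - credit n A))"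
    using C by blast
qed

theorem least_model_eq_M0: "least_model (Ps n) = M0"
proof
  show "least_model (Ps n) \<subseteq> M0"
    using herbrand_interp_least_model models_M0[of n] by (simp add: M0_def least_model_le)
  show "M0 \<subseteq> least_model (Ps n)" by (rule M0_subset_least_model)
qed

end

end

theorem least_model_unfold_fold:
  assumes "transf_seq Ps lab n" "\<And>k q. k < n \<Longrightarrow> lab k \<noteq> RElim q"
    and "\<And>k q D. k < n \<Longrightarrow> lab k = RFold q \<Longrightarrow> D \<in> defs_upto lab k \<Longrightarrow>
           hpred (hd D) = q \<Longrightarrow> \<exists>j<n. lab j = RUnfold D"
  shows "least_model (Ps n) = least_model (Ps 0 \<union> defs_upto lab n)"
proof -
  interpret unfold_fold_sequence Ps lab n using assms(1,2) by unfold_locales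
  show ?thesis using least_model_eq_M0 assms(3) by (simp add: M0_def)
qed

theorem least_model_unfold_fold_elim:
  assumes seq: "transf_seq Ps lab n"
    and fold_unfolded: "\<And>k q D. k < n \<Longrightarrow> lab k = RFold q \<Longrightarrow> D \<in> defs_upto lab k \<Longrightarrow>
           hpred (hd D) = q \<Longrightarrow> \<exists>j<n. lab j = RUnfold D"
    and elim_last: "\<And>k q. k < n \<Longrightarrow> lab k = RElim q \<Longrightarrow> Suc k = n \<and> q = p"
    and A: "hpred A = p"
  shows "A \<in> least_model (Ps n) \<longleftrightarrow> A \<in> least_model (Ps 0 \<union> defs_upto lab n)"
proof (cases "\<exists>m q. n = Suc m \<and> lab m = RElim q")
  case True
  then obtain m where n: "n = Suc m" and elim: "lab m = RElim p" using elim_last by blast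
  have "least_model (Ps m) = least_model (Ps 0 \<union> defs_upto lab m)"
  proof (rule least_model_unfold_fold)
    show "transf_seq Ps lab m" using seq n by (simp add: transf_seq_prefix)
    show "lab k \<noteq> RElim q" if "k < m" for k q using elim_last[of k q] that n by auto
    show "\<exists>j<m. lab j = RUnfold D"
      if fold: "k < m" "lab k = RFold q" "D \<in> defs_upto lab k" "hpred (hd D) = q" for k q D
    proof -
      obtain j where "j < Suc m" "lab j = RUnfold D" using fold_unfolded[OF _ fold(2-4)] fold(1) n by auto
      moreover from this(2) have "j \<noteq> m" using elim by auto
      ultimately show ?thesis by (auto elim: less_SucE)
    qed
  qed
  moreover have "defs_upto lab n = defs_upto lab m" using n elim by (simp add: defs_upto_Suc)
  moreover have "tstep Ps lab m" using seq n by (simp add: transf_seq_def)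
  then have "def_elim (Ps m) p (Ps n)" using elim n by (simp add: tstep_def)
  ultimately show ?thesis using least_model_def_elim A by simp
next
  case False
  have "lab k \<noteq> RElim q" if "k < n" for k q
  proof
    assume "lab k = RElim q"
    then have "Suc k = n" using elim_last that by blast
    then show False using False \<open>lab k = RElim q\<close> by blast
  qed
  then show ?thesis using least_model_unfold_fold[OF seq _ fold_unfolded] by simp
qed

theorem theorem5:
  fixes Ps :: "nat \<Rightarrow> program" and lab :: "nat \<Rightarrow> rule_app" and n :: nat and p :: pred
  assumes seq: "transf_seq Ps lab n"
    and p_in: "p \<in> prog_preds (Ps n)"
    and fold_cond: "\<forall>k<n. \<forall>newp. lab k = RFold newp \<longrightarrow>
                      (\<forall>D\<in>defs_upto lab k. hpred (hd D) = newp \<longrightarrow>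
                         (\<exists>j. 1 \<le> j \<and> j \<le> n - 1 \<and> D \<in> Ps j \<and> lab j = RUnfold D))"
    and elim_cond: "\<forall>k<n. \<forall>q. lab k = RElim q \<longrightarrow> k = n - 1 \<and> q = p"
  shows "\<forall>A. ground_hatom A \<and> hpred A = p \<longrightarrow>
           (A \<in> least_model (Ps 0 \<union> defs_upto lab n) \<longleftrightarrow> A \<in> least_model (Ps n))"
proof (intro allI impI)
  fix A assume A: "ground_hatom A \<and> hpred A = p"
  have "A \<in> least_model (Ps n) \<longleftrightarrow> A \<in> least_model (Ps 0 \<union> defs_upto lab n)"
  proof (rule least_model_unfold_fold_elim[OF seq])
    show "\<exists>j<n. lab j = RUnfold D"
      if fold: "k < n" "lab k = RFold q" "D \<in> defs_upto lab k" "hpred (hd D) = q" for k q D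
    proof -
      obtain j where "j \<le> n - 1" "lab j = RUnfold D" using fold_cond fold by blast
      then show ?thesis using fold(1) by (intro exI[of _ j]) simp
    qed
    show "Suc k = n \<and> q = p" if elim: "k < n" "lab k = RElim q" for k q
    proof -
      have "k = n - 1 \<and> q = p" using elim_cond elim by blast
      then show ?thesis using elim(1) by simp
    qed
  qed (use A in simp)
  then show "A \<in> least_model (Ps 0 \<union> defs_upto lab n) \<longleftrightarrow> A \<in> least_model (Ps n)" by blast
qed

end
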